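(* Let $\mathcal{T}=(V,A,E,f,q,v_0)$ be a decorated pseudo-rooted tree and let $\mathscr{P}$ be a partition of $A\setminus A_0$. Then (a) $M(\mathcal{T})=\sum_{\alpha\in A\setminus A_0}M(\mathcal{T}_\alpha)+\sum_{\alpha\in A\setminus A_0}\mathfrak{M}(\mathcal{T},\{\alpha\})-I(A\setminus A_0,A\setminus A_0)$; (b) $M(\mathcal{T})=\sum_{X\in\mathscr{P}}M(\mathcal{T}_X)+\sum_{X\in\mathscr{P}}\mathfrak{M}(\mathcal{T},X)-\sum_{(X,Y)\in\mathscr{P}^2,\,X\neq Y}I(X,Y)$.
   Context: A graph is a pair $(X_0,X_1)$ of finite sets such that each element of $X_1$ (an edge) is a $2$-element subset of $X_0$; elements of $X_0$ are called cells. The valency $\delta_x$ of a cell $x$ is the number of edges containing $x$. A path is a tuple $(x_0,\dots,x_n)$ ($n\ge 0$) of cells such that $\{x_i,x_{i+1}\}$ is an edge for each $i<n$ and these edges are pairwise distinct; a cell (resp. edge) is in the path if it is one of the $x_i$ (resp. one of the $\{x_i,x_{i+1}\}$). The graph is a tree if for any cells $x,y$ there is a unique path from $x$ to $y$, denoted $\gamma_{x,y}$. A decorated tree is a $5$-tuple $(V,A,E,f,q)$ where $V$ (vertices) and $A$ (arrows) are finite disjoint sets, $(V\cup A,E)$ is a tree, every arrow has valency $1$, $f:A\to\mathbb{Z}$, $q$ assigns an integer $q(e,x)$ to each pair $(e,x)$ with $e\in E$, $x\in e$, such that $q(e,\alpha)=1$ whenever $\alpha\in A$, and for every $v\in V$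 and distinct edges $e,e'$ containing $v$, $\gcd(q(e,v),q(e',v))=1$. Let $A_0=\{\alpha\in A: f(\alpha)=0\}$. For $x\in V\cup A$ and an edge $e\ni x$, $Q(e,x)=\prod q(e',x)$ over edges $e'\neq e$ containing $x$ (empty products equal $1$). An edge $\varepsilon$ is incident to a path $\gamma$ if $\varepsilon$ is not in $\gamma$ but contains some cell $u$ of $\gamma$; then $q(\varepsilon,\gamma):=q(\varepsilon,u)$. For $v\in V\cup A$, $\alpha\in A$, $v\ne\alpha$: $x_{v,\alpha}=f(\alpha)\prod_\varepsilon q(\varepsilon,\gamma_{v,\alpha})$ over all edges $\varepsilon$ incident to $\gamma_{v,\alpha}$. For $v\in V\cup A_0$, $N_v=\sum_{\alpha\in A\setminus A_0}x_{v,\alpha}$, and $M(\mathcal{T})=-\sum_{v\in V\cup A_0}N_v(\delta_v-2)$. For a path $\gamma=(x_0,\dots,x_n)$ with $n>0$ and a cell $u$ of $\gamma$, $Q(\gamma,u)=\prod q(\varepsilon,u)$ over edges $\varepsilon$ containing $u$ and not in $\gamma$, and $Q^*(\gamma)=\prod_{0<i<n}Q(\gamma,x_i)$. For $X,Y\subseteq A\setminus A_0$, $I(X,Y)=\sum_{(\alpha,\beta)\in X\times Y,\ \alpha\ne\beta}Q^*(\gamma_{\alpha,\beta})f(\alpha)f(\beta)$. For $X\subseteq A\setminus A_0$, with $X^c=(A\setminus A_0)\setminus X$, $\mathfrak{M}(\mathcal{T},X)=\sum_{\alpha\in X}\big(1-\tfrac{1}{f(\alpha)}\big)I(\{\alpha\},X^c)$.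 A pseudo-root of $(V,A,E,f,q)$ is a vertex $v_0$ such that $q(e,v_0)=1$ for all edges $e$ containing $v_0$, and for every $v\in V\setminus\{v_0\}$ at most one edge $e$ containing $v$ and not in $\gamma_{v_0,v}$ satisfies $q(e,v)\ne1$. A decorated pseudo-rooted tree is $(V,A,E,f,q,v_0)$ with $(V,A,E,f,q)$ a decorated tree and $v_0$ a pseudo-root; $M$ etc. are those of $(V,A,E,f,q)$. For nonempty $X\subseteq A\setminus A_0$, $\mathcal{T}_X$ is defined as follows. Let $\mathcal{T}'_X$ have arrow set $X$, vertex set the vertices of $\mathcal{T}$ lying on $\gamma_{v_0,\alpha}$ for some $\alpha\in X$, edge set the edges of $\mathcal{T}$ lying in $\gamma_{v_0,\alpha}$ for some $\alpha\in X$, with decorations as in $\mathcal{T}$. For each vertex $v$ of $\mathcal{T}'_X$ let $b_v=\prod q(e,v)$ over edges $e$ of $\mathcal{T}$ containing $v$ that are not edges of $\mathcal{T}'_X$. For each such $v$ with $b_v\ne1$, add a new arrow $\alpha_v$ with $f(\alpha_v)=0$ and an edge $\{v,\alpha_v\}$ decorated $b_v$ near $v$ and $1$ near $\alpha_v$. The result, with pseudo-root $v_0$, is $\mathcal{T}_X$; and $\mathcal{T}_\alpha:=\mathcal{T}_{\{\alpha\}}$. Partitions consist of nonempty sets. *)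

theory Defs
  imports Complex_Main "HOL-Library.Disjoint_Sets"
begin

definition graph :: "'a set \<Rightarrow> 'a set set \<Rightarrow> bool" where
  "graph X0 X1 \<longleftrightarrow> finite X0 \<and> (\<forall>e\<in>X1. e \<subseteq> X0 \<and> card e = 2)"

definition valency :: "'a set set \<Rightarrow> 'a \<Rightarrow> nat" where
  "valency X1 x = card {e\<in>X1. x \<in> e}"

definition is_path :: "'a set \<Rightarrow> 'a set set \<Rightarrow> 'a list \<Rightarrow> bool" where
  "is_path X0 X1 p \<longleftrightarrow> p \<noteq> [] \<and> set p \<subseteq> X0 \<and>
     (\<forall>i. Suc i < length p \<longrightarrow> {p ! i, p ! Suc i} \<in> X1) \<and>
     distinct (map (\<lambda>i. {p ! i, p ! Suc i}) [0..<length p - 1])"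

definition path_edges :: "'a list \<Rightarrow> 'a set set" where
  "path_edges p = {{p ! i, p ! Suc i} | i. Suc i < length p}"

definition tree :: "'a set \<Rightarrow> 'a set set \<Rightarrow> bool" where
  "tree X0 X1 \<longleftrightarrow> graph X0 X1 \<and>
     (\<forall>x\<in>X0. \<forall>y\<in>X0. \<exists>!p. is_path X0 X1 p \<and> hd p = x \<and> last p = y)"

definition gamma :: "'a set \<Rightarrow> 'a set set \<Rightarrow> 'a \<Rightarrow> 'a \<Rightarrow> 'a list" where
  "gamma X0 X1 x y = (THE p. is_path X0 X1 p \<and> hd p = x \<and> last p = y)"

text \<open>A decorated tree is given by V, A, E, f, q; f is only relevant on A and q only on
  pairs (e,x) with e in E and x in e.\<close>
definition dtree :: "'a set \<Rightarrow> 'a set \<Rightarrow> 'a set set \<Rightarrow> ('a \<Rightarrow> int) \<Rightarrow> ('a set \<Rightarrow> 'a \<Rightarrow> int) \<Rightarrow> bool" where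
  "dtree V A E f q \<longleftrightarrow> finite V \<and> finite A \<and> V \<inter> A = {} \<and> tree (V \<union> A) E \<and>
     (\<forall>\<alpha>\<in>A. valency E \<alpha> = 1) \<and>
     (\<forall>e\<in>E. \<forall>\<alpha>\<in>A. \<alpha> \<in> e \<longrightarrow> q e \<alpha> = 1) \<and>
     (\<forall>v\<in>V. \<forall>e\<in>E. \<forall>e'\<in>E. v \<in> e \<and> v \<in> e' \<and> e \<noteq> e' \<longrightarrow> gcd (q e v) (q e' v) = 1)"

definition A0 :: "'a set \<Rightarrow> ('a \<Rightarrow> int) \<Rightarrow> 'a set" where
  "A0 A f = {\<alpha>\<in>A. f \<alpha> = 0}"

definition incident :: "'a set set \<Rightarrow> 'a list \<Rightarrow> 'a set set" where
  "incident E \<gamma> = {\<epsilon>\<in>E. \<epsilon> \<notin> path_edges \<gamma> \<and> (\<exists>u\<in>set \<gamma>. u \<in> \<epsilon>)}"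

text \<open>q(eps, gamma) := q(eps, u) for the cell u of gamma lying in eps (unique in a tree).\<close>
definition q_path :: "('a set \<Rightarrow> 'a \<Rightarrow> int) \<Rightarrow> 'a set \<Rightarrow> 'a list \<Rightarrow> int" where
  "q_path q \<epsilon> \<gamma> = q \<epsilon> (SOME u. u \<in> set \<gamma> \<and> u \<in> \<epsilon>)"

definition xva :: "'a set \<Rightarrow> 'a set \<Rightarrow> 'a set set \<Rightarrow> ('a \<Rightarrow> int) \<Rightarrow> ('a set \<Rightarrow> 'a \<Rightarrow> int) \<Rightarrow> 'a \<Rightarrow> 'a \<Rightarrow> int" where
  "xva V A E f q v \<alpha> =
     f \<alpha> * (\<Prod>\<epsilon>\<in>incident E (gamma (V \<union> A) E v \<alpha>). q_path q \<epsilon> (gamma (V \<union> A) E v \<alpha>))"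

definition Nv :: "'a set \<Rightarrow> 'a set \<Rightarrow> 'a set set \<Rightarrow> ('a \<Rightarrow> int) \<Rightarrow> ('a set \<Rightarrow> 'a \<Rightarrow> int) \<Rightarrow> 'a \<Rightarrow> int" where
  "Nv V A E f q v = (\<Sum>\<alpha>\<in>A - A0 A f. xva V A E f q v \<alpha>)"

definition MT :: "'a set \<Rightarrow> 'a set \<Rightarrow> 'a set set \<Rightarrow> ('a \<Rightarrow> int) \<Rightarrow> ('a set \<Rightarrow> 'a \<Rightarrow> int) \<Rightarrow> int" where
  "MT V A E f q = - (\<Sum>v\<in>V \<union> A0 A f. Nv V A E f q v * (int (valency E v) - 2))"

definition Qpath :: "'a set set \<Rightarrow> ('a set \<Rightarrow> 'a \<Rightarrow> int) \<Rightarrow> 'a list \<Rightarrow> 'a \<Rightarrow> int" where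
  "Qpath E q \<gamma> u = (\<Prod>\<epsilon>\<in>{\<epsilon>\<in>E. u \<in> \<epsilon> \<and> \<epsilon> \<notin> path_edges \<gamma>}. q \<epsilon> u)"

definition Qstar :: "'a set set \<Rightarrow> ('a set \<Rightarrow> 'a \<Rightarrow> int) \<Rightarrow> 'a list \<Rightarrow> int" where
  "Qstar E q \<gamma> = (\<Prod>i\<in>{1..<length \<gamma> - 1}. Qpath E q \<gamma> (\<gamma> ! i))"

definition II :: "'a set \<Rightarrow> 'a set \<Rightarrow> 'a set set \<Rightarrow> ('a \<Rightarrow> int) \<Rightarrow> ('a set \<Rightarrow> 'a \<Rightarrow> int) \<Rightarrow> 'a set \<Rightarrow> 'a set \<Rightarrow> int" where
  "II V A E f q X Y = (\<Sum>p\<in>{(\<alpha>, \<beta>) \<in> X \<times> Y. \<alpha> \<noteq> \<beta>}.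
      Qstar E q (gamma (V \<union> A) E (fst p) (snd p)) * f (fst p) * f (snd p))"

definition frakM :: "'a set \<Rightarrow> 'a set \<Rightarrow> 'a set set \<Rightarrow> ('a \<Rightarrow> int) \<Rightarrow> ('a set \<Rightarrow> 'a \<Rightarrow> int) \<Rightarrow> 'a set \<Rightarrow> real" where
  "frakM V A E f q X = (\<Sum>\<alpha>\<in>X. (1 - 1 / real_of_int (f \<alpha>)) *
       real_of_int (II V A E f q {\<alpha>} ((A - A0 A f) - X)))"

definition pseudo_root :: "'a set \<Rightarrow> 'a set \<Rightarrow> 'a set set \<Rightarrow> ('a set \<Rightarrow> 'a \<Rightarrow> int) \<Rightarrow> 'a \<Rightarrow> bool" where
  "pseudo_root V A E q v0 \<longleftrightarrow> v0 \<in> V \<and> (\<forall>e\<in>E. v0 \<in> e \<longrightarrow> q e v0 = 1) \<and>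
     (\<forall>v\<in>V - {v0}. card {e\<in>E. v \<in> e \<and> e \<notin> path_edges (gamma (V \<union> A) E v0 v) \<and> q e v \<noteq> 1} \<le> 1)"

definition dptree :: "'a set \<Rightarrow> 'a set \<Rightarrow> 'a set set \<Rightarrow> ('a \<Rightarrow> int) \<Rightarrow> ('a set \<Rightarrow> 'a \<Rightarrow> int) \<Rightarrow> 'a \<Rightarrow> bool" where
  "dptree V A E f q v0 \<longleftrightarrow> dtree V A E f q \<and> pseudo_root V A E q v0"

text \<open>Cells of T_X live in the sum type: Inl c is the old cell c, Inr v is the new arrow alpha_v.\<close>

definition subV :: "'a set \<Rightarrow> 'a set \<Rightarrow> 'a set set \<Rightarrow> 'a \<Rightarrow> 'a set \<Rightarrow> 'a set" where
  "subV V A E v0 X = {v\<in>V. \<exists>\<alpha>\<in>X. v \<in> set (gamma (V \<union> A) E v0 \<alpha>)}"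

definition subE :: "'a set \<Rightarrow> 'a set \<Rightarrow> 'a set set \<Rightarrow> 'a \<Rightarrow> 'a set \<Rightarrow> 'a set set" where
  "subE V A E v0 X = (\<Union>\<alpha>\<in>X. path_edges (gamma (V \<union> A) E v0 \<alpha>))"

definition bv :: "'a set \<Rightarrow> 'a set \<Rightarrow> 'a set set \<Rightarrow> ('a set \<Rightarrow> 'a \<Rightarrow> int) \<Rightarrow> 'a \<Rightarrow> 'a set \<Rightarrow> 'a \<Rightarrow> int" where
  "bv V A E q v0 X v = (\<Prod>e\<in>{e\<in>E. v \<in> e \<and> e \<notin> subE V A E v0 X}. q e v)"

definition newv :: "'a set \<Rightarrow> 'a set \<Rightarrow> 'a set set \<Rightarrow> ('a set \<Rightarrow> 'a \<Rightarrow> int) \<Rightarrow> 'a \<Rightarrow> 'a set \<Rightarrow> 'a set" where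
  "newv V A E q v0 X = {v\<in>subV V A E v0 X. bv V A E q v0 X v \<noteq> 1}"

definition TX_V :: "'a set \<Rightarrow> 'a set \<Rightarrow> 'a set set \<Rightarrow> 'a \<Rightarrow> 'a set \<Rightarrow> ('a + 'a) set" where
  "TX_V V A E v0 X = Inl ` subV V A E v0 X"

definition TX_A :: "'a set \<Rightarrow> 'a set \<Rightarrow> 'a set set \<Rightarrow> ('a set \<Rightarrow> 'a \<Rightarrow> int) \<Rightarrow> 'a \<Rightarrow> 'a set \<Rightarrow> ('a + 'a) set" where
  "TX_A V A E q v0 X = Inl ` X \<union> Inr ` newv V A E q v0 X"

definition TX_E :: "'a set \<Rightarrow> 'a set \<Rightarrow> 'a set set \<Rightarrow> ('a set \<Rightarrow> 'a \<Rightarrow> int) \<Rightarrow> 'a \<Rightarrow> 'a set \<Rightarrow> ('a + 'a) set set" where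
  "TX_E V A E q v0 X = (\<lambda>e. Inl ` e) ` subE V A E v0 X \<union> (\<lambda>v. {Inl v, Inr v}) ` newv V A E q v0 X"

definition TX_f :: "('a \<Rightarrow> int) \<Rightarrow> ('a + 'a) \<Rightarrow> int" where
  "TX_f f = case_sum f (\<lambda>_. 0)"

definition TX_q :: "'a set \<Rightarrow> 'a set \<Rightarrow> 'a set set \<Rightarrow> ('a set \<Rightarrow> 'a \<Rightarrow> int) \<Rightarrow> 'a \<Rightarrow> 'a set \<Rightarrow> ('a + 'a) set \<Rightarrow> ('a + 'a) \<Rightarrow> int" where
  "TX_q V A E q v0 X e x = (case x of
      Inl y \<Rightarrow> (if Inr y \<in> e then bv V A E q v0 X y else q {z. Inl z \<in> e} y)
    | Inr _ \<Rightarrow> 1)"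

definition MX :: "'a set \<Rightarrow> 'a set \<Rightarrow> 'a set set \<Rightarrow> ('a \<Rightarrow> int) \<Rightarrow> ('a set \<Rightarrow> 'a \<Rightarrow> int) \<Rightarrow> 'a \<Rightarrow> 'a set \<Rightarrow> int" where
  "MX V A E f q v0 X = MT (TX_V V A E v0 X) (TX_A V A E q v0 X) (TX_E V A E q v0 X)
        (TX_f f) (TX_q V A E q v0 X)"

end

theory Submission
  imports Defs
begin

(* Fix an arrow r with f r <> 0 and orient the tree towards r.  Then x(v,r) factors as
   f r * Qstar(gamma(v,r)) times the decorations on the child edges of v, and in the sum of
   x(v,r) * (valency v - 2) over all cells the contributions pushed from each cell to its children
   telescope.  What survives is the arrow term of r: f r, minus f r * Qstar(gamma(alpha,r)) for
   every other arrow alpha, minus a defect for every vertex; so M(T) is the sum of the arrow terms.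
   The same holds for T_X with only the arrows of X, and the pseudo-root condition is exactly what
   makes T_X see the same Qstar values and the same vertex defects as T: vertices on the subtree
   spanned by v0 and X keep at most one nontrivial cut-off decoration, and all other vertices have
   defect 0.  Hence M(T) - sum_X M(T_X) only consists of cross terms between different blocks, and
   so do frakM and the sums of I; comparing them gives (b), and (a) is the partition into
   singletons. *)

section \<open>Edge lists of paths and walks\<close>

fun edge_list :: "'a list \<Rightarrow> 'a set list" where
  "edge_list (x # y # r) = {x, y} # edge_list (y # r)"
| "edge_list _ = []"

lemma length_edge_list: "length (edge_list p) = length p - 1"
  by (induction p rule: edge_list.induct) auto

lemma nth_edge_list: "i < length p - 1 \<Longrightarrow> edge_list p ! i = {p ! i, p ! Suc i}"
proof (induction p arbitrary: i rule: edge_list.induct)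
  case (1 x y r)
  then show ?case by (cases i) auto
qed auto

lemma edge_list_conv_nth: "edge_list p = map (\<lambda>i. {p ! i, p ! Suc i}) [0..<length p - 1]"
  by (rule nth_equalityI) (auto simp: length_edge_list nth_edge_list)

lemma path_edges_eq: "path_edges p = set (edge_list p)"
  unfolding path_edges_def edge_list_conv_nth by (auto simp: image_iff)

lemma is_path_iff:
  "is_path C E p \<longleftrightarrow> p \<noteq> [] \<and> set p \<subseteq> C \<and> set (edge_list p) \<subseteq> E \<and> distinct (edge_list p)"
proof -
  have "(\<forall>i. Suc i < length p \<longrightarrow> {p ! i, p ! Suc i} \<in> E) \<longleftrightarrow> set (edge_list p) \<subseteq> E"
    unfolding path_edges_eq[symmetric] path_edges_def by auto
  then show ?thesis
    unfolding is_path_def edge_list_conv_nth by auto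
qed

lemma edge_list_Cons: "p \<noteq> [] \<Longrightarrow> edge_list (x # p) = {x, hd p} # edge_list p"
  by (cases p) auto

lemma edge_list_append:
  "edge_list (xs @ y # ys) = edge_list (xs @ [y]) @ edge_list (y # ys)"
proof (induction xs)
  case (Cons x xs)
  then show ?case by (cases xs) auto
qed simp

lemma edge_list_snoc: "xs \<noteq> [] \<Longrightarrow> edge_list (xs @ [x]) = edge_list xs @ [{last xs, x}]"
  by (induction xs rule: edge_list.induct) auto

lemma edge_list_rev: "edge_list (rev p) = rev (edge_list p)"
proof (induction p)
  case (Cons x p)
  then show ?case
    by (cases "p = []") (auto simp: edge_list_snoc edge_list_Cons last_rev insert_commute)
qed simp

lemma edge_list_map: "edge_list (map f p) = map (image f) (edge_list p)"
  by (induction p rule: edge_list.induct) auto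

lemma subset_if_in_edge_list: "e \<in> set (edge_list p) \<Longrightarrow> e \<subseteq> set p"
  by (induction p rule: edge_list.induct) auto

lemma distinct_edge_list: "distinct p \<Longrightarrow> distinct (edge_list p)"
proof (induction p rule: edge_list.induct)
  case (1 x y r)
  then show ?case using subset_if_in_edge_list[of "{x, y}" "y # r"] by auto
qed auto

lemma edge_list_infix:
  assumes "s \<noteq> []"
  shows "edge_list (a @ s @ c) = edge_list (a @ [hd s]) @ edge_list s @ edge_list (last s # c)"
proof -
  obtain s' where s': "s = hd s # s'" using assms by (cases s) auto
  obtain s'' where s'': "s = s'' @ [last s]" using assms by (metis append_butlast_last_id)
  have "edge_list (s @ c) = edge_list s @ edge_list (last s # c)"
    using edge_list_append[of s'' "last s" c] s'' by (metis append.assoc append_Cons append_Nil)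
  moreover have "edge_list (a @ s @ c) = edge_list (a @ [hd s]) @ edge_list (s @ c)"
    using edge_list_append[of a "hd s" "s' @ c"] s' by (metis append_Cons)
  ultimately show ?thesis by simp
qed

lemma distinct_split_two:
  assumes "distinct p" "u \<in> set p" "u' \<in> set p" "u \<noteq> u'"
  obtains a b c where "p = a @ u # b @ u' # c \<or> p = a @ u' # b @ u # c"
proof -
  obtain a b where p: "p = a @ u # b" using assms(2) by (meson split_list)
  show ?thesis
  proof (cases "u' \<in> set b")
    case True
    then obtain b1 c where "b = b1 @ u' # c" by (meson split_list)
    then show ?thesis using p that by auto
  next
    case False
    then have "u' \<in> set a" using p assms(3,4) by auto
    then obtain a1 b1 where "a = a1 @ u' # b1" by (meson split_list)
    then show ?thesis using p that by auto
  qed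
qed

definition walk :: "'a set \<Rightarrow> 'a set set \<Rightarrow> 'a list \<Rightarrow> bool" where
  "walk C E w \<longleftrightarrow> w \<noteq> [] \<and> set w \<subseteq> C \<and> set (edge_list w) \<subseteq> E"

lemma walk_if_is_path: "is_path C E p \<Longrightarrow> walk C E p"
  by (simp add: is_path_iff walk_def)

lemma is_path_if_distinct_walk: "walk C E w \<Longrightarrow> distinct w \<Longrightarrow> is_path C E w"
  by (simp add: is_path_iff walk_def distinct_edge_list)

lemma walk_append:
  assumes "walk C E p" "walk C E p'" "last p = hd p'"
  shows "walk C E (p @ tl p')" "hd (p @ tl p') = hd p" "last (p @ tl p') = last p'"
    "set (edge_list (p @ tl p')) = set (edge_list p) \<union> set (edge_list p')"
    "set (p @ tl p') = set p \<union> set p'"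
proof -
  obtain a x where a: "p = a @ [x]" using assms(1) unfolding walk_def by (metis rev_exhaust)
  obtain t where t: "p' = x # t" using assms(2,3) a unfolding walk_def by (cases p') auto
  have joined: "p @ tl p' = a @ x # t" using a t by simp
  show edges: "set (edge_list (p @ tl p')) = set (edge_list p) \<union> set (edge_list p')"
    unfolding joined edge_list_append[of a x t] using a t by simp
  show cells: "set (p @ tl p') = set p \<union> set p'" unfolding joined using a t by auto
  show "hd (p @ tl p') = hd p" unfolding joined a by (cases a) auto
  show "last (p @ tl p') = last p'" unfolding joined t using a by (cases t) auto
  show "walk C E (p @ tl p')" using assms edges cells unfolding walk_def by auto
qed

lemma walk_shortcut:
  assumes "walk C E w"
  obtains w' where "walk C E w'" "distinct w'" "hd w' = hd w" "last w' = last w"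
    "set w' \<subseteq> set w" "set (edge_list w') \<subseteq> set (edge_list w)"
  using assms
proof (induction "length w" arbitrary: w rule: less_induct)
  case less
  show ?case
  proof (cases "distinct w")
    case True
    then show ?thesis using less.prems by blast
  next
    case False
    then obtain xs ys zs y where w: "w = xs @ [y] @ ys @ [y] @ zs"
      using not_distinct_decomp by blast
    define w1 where "w1 = xs @ y # zs"
    have "edge_list w = edge_list (xs @ [y]) @ edge_list (y # ys @ [y]) @ edge_list (y # zs)"
      unfolding w using edge_list_append[of xs y "ys @ y # zs"] edge_list_append[of "y # ys" y zs]
      by simp
    moreover have "edge_list w1 = edge_list (xs @ [y]) @ edge_list (y # zs)"
      unfolding w1_def by (rule edge_list_append)
    ultimately have edges: "set (edge_list w1) \<subseteq> set (edge_list w)" by auto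
    have "walk C E w1" "length w1 < length w"
      using less.prems(2) edges unfolding walk_def by (auto simp: w1_def w)
    moreover have "hd w1 = hd w" "last w1 = last w" "set w1 \<subseteq> set w"
      unfolding w1_def w by (cases xs; cases zs; auto)+
    ultimately show ?thesis
      using less.hyps[of w1] less.prems(1) edges by (metis order.trans)
  qed
qed

section \<open>Defects and products along paths\<close>

text \<open>What a vertex with child edges S and decorations h adds to an arrow term (see
  xva_valency_eq); it vanishes when at most one decoration differs from 1.\<close>

definition defect :: "'b set \<Rightarrow> ('b \<Rightarrow> int) \<Rightarrow> int" where
  "defect S h = (\<Prod>s\<in>S. h s) * (int (card S) - 1) - (\<Sum>s\<in>S. \<Prod>t\<in>S - {s}. h t) + 1"

lemma defect_empty [simp]: "defect {} h = 0"
  by (simp add: defect_def)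

lemma defect_insert:
  assumes "finite S" "z \<notin> S"
  shows "defect (insert z S) h = h z * defect S h + (h z - 1) * ((\<Prod>s\<in>S. h s) - 1)"
proof -
  have "(\<Sum>s\<in>S. \<Prod>t\<in>insert z S - {s}. h t) = (\<Sum>s\<in>S. h z * (\<Prod>t\<in>S - {s}. h t))"
  proof (rule sum.cong[OF refl])
    fix s assume "s \<in> S"
    then have "insert z S - {s} = insert z (S - {s})" using assms by auto
    then show "(\<Prod>t\<in>insert z S - {s}. h t) = h z * (\<Prod>t\<in>S - {s}. h t)" using assms by simp
  qed
  then have "(\<Sum>s\<in>insert z S. \<Prod>t\<in>insert z S - {s}. h t)
      = (\<Prod>t\<in>S. h t) + h z * (\<Sum>s\<in>S. \<Prod>t\<in>S - {s}. h t)"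
    using assms by (simp add: sum_distrib_left insert_Diff_if)
  then show ?thesis using assms unfolding defect_def by (simp add: algebra_simps)
qed

lemma defect_union_ones:
  assumes "finite T" "finite S" "S \<inter> T = {}" "\<forall>t\<in>T. h t = 1"
  shows "defect (S \<union> T) h = defect S h"
  using assms
proof (induction T rule: finite_induct)
  case (insert x F)
  then have "defect (insert x (S \<union> F)) h = defect (S \<union> F) h" by (simp add: defect_insert)
  then show ?case using insert by simp
qed simp

lemma defect_union_almost_ones:
  assumes "finite S" "finite T" "S \<inter> T = {}" "card {t\<in>T. h t \<noteq> 1} \<le> 1"
  shows "defect (S \<union> T) h = (\<Prod>t\<in>T. h t) * defect S h + ((\<Prod>t\<in>T. h t) - 1) * ((\<Prod>s\<in>S. h s) - 1)"
proof (cases "{t\<in>T. h t \<noteq> 1} = {}")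
  case True
  then show ?thesis using defect_union_ones[OF assms(2,1,3)] by auto
next
  case False
  then have "card {t\<in>T. h t \<noteq> 1} = 1" using assms(2,4) by (simp add: card_gt_0_iff le_antisym Suc_leI)
  then obtain z where z: "{t\<in>T. h t \<noteq> 1} = {z}" by (meson card_1_singletonE)
  then have zT: "z \<in> T" and ones: "\<forall>t\<in>T - {z}. h t = 1" by auto
  then have prod_T: "(\<Prod>t\<in>T. h t) = h z" using assms(2) by (simp add: prod.remove)
  have "S \<union> T = insert z (S \<union> (T - {z}))" using zT by auto
  then have "defect (S \<union> T) h = h z * defect (S \<union> (T - {z})) h + (h z - 1) * ((\<Prod>s\<in>S \<union> (T - {z}). h s) - 1)"
    using assms zT by (simp only:) (rule defect_insert, auto)
  also have "defect (S \<union> (T - {z})) h = defect S h"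
    using defect_union_ones[of "T - {z}" S h] assms ones by auto
  also have "(\<Prod>s\<in>S \<union> (T - {z}). h s) = (\<Prod>s\<in>S. h s)"
    using assms ones by (subst prod.union_disjoint) auto
  finally show ?thesis using prod_T by simp
qed

lemma defect_almost_ones: "finite T \<Longrightarrow> card {t\<in>T. h t \<noteq> 1} \<le> 1 \<Longrightarrow> defect T h = 0"
  using defect_union_almost_ones[of "{}" T h] by simp

lemma defect_reindex: "inj_on \<phi> S \<Longrightarrow> defect (\<phi> ` S) h = defect S (h \<circ> \<phi>)"
proof -
  assume inj: "inj_on \<phi> S"
  have "(\<Prod>t\<in>\<phi> ` S - {\<phi> s}. h t) = (\<Prod>t\<in>S - {s}. h (\<phi> t))" if "s \<in> S" for s
  proof -
    have "\<phi> ` S - {\<phi> s} = \<phi> ` (S - {s})" using inj that by (auto simp: inj_on_def)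
    moreover have "inj_on \<phi> (S - {s})" using inj by (rule inj_on_subset) auto
    ultimately show ?thesis by (simp add: prod.reindex)
  qed
  then show ?thesis unfolding defect_def using inj by (simp add: prod.reindex sum.reindex card_image)
qed

lemma prod_set_path_split:
  assumes "distinct p" "length p \<ge> 2"
  shows "(\<Prod>u\<in>set p. F u) = F (hd p) * (\<Prod>i\<in>{1..<length p - 1}. F (p ! i)) * F (last p)"
proof -
  obtain n where n: "length p = Suc (Suc n)" using assms(2) by (metis add_2_eq_Suc le_Suc_ex)
  then have ends: "hd p = p ! 0" "last p = p ! Suc n" "length p - 1 = Suc n"
    by (simp_all add: hd_conv_nth last_conv_nth flip: length_greater_0_conv)
  have "set p = (nth p) ` {0..<length p}" by (auto simp: set_conv_nth)
  moreover have "inj_on (nth p) {0..<length p}" using assms(1) by (intro inj_on_nth) auto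
  ultimately have "(\<Prod>u\<in>set p. F u) = (\<Prod>i\<in>{0..<Suc (Suc n)}. F (p ! i))"
    by (simp add: prod.reindex n)
  also have "\<dots> = F (p ! 0) * (\<Prod>i\<in>{1..<Suc n}. F (p ! i)) * F (p ! Suc n)"
    by (simp add: prod.atLeast_Suc_lessThan prod.atLeastLessThan_Suc mult.assoc)
  finally show ?thesis unfolding ends .
qed

lemma Qstar_Cons:
  assumes "length p \<ge> 2" "distinct (c # p)"
  shows "Qstar E q (c # p) = Qpath E q (c # p) (hd p) * Qstar E q p"
proof -
  have ne: "p \<noteq> []" using assms by auto
  have path_edges_Cons: "path_edges (c # p) = insert {c, hd p} (path_edges p)"
    using ne by (simp add: path_edges_eq edge_list_Cons)
  have interior: "Qpath E q (c # p) (p ! j) = Qpath E q p (p ! j)" if "1 \<le> j" "j < length p" for j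
  proof -
    have "p ! j \<noteq> c" "p ! j \<noteq> hd p"
      using assms(2) that ne by (auto simp: hd_conv_nth nth_eq_iff_index_eq)
    then show ?thesis unfolding Qpath_def path_edges_Cons by (intro prod.cong) auto
  qed
  have "Qstar E q (c # p) = (\<Prod>i\<in>{Suc 0..<Suc (length p - 1)}. Qpath E q (c # p) ((c # p) ! i))"
    unfolding Qstar_def using ne by simp
  also have "\<dots> = (\<Prod>j\<in>{0..<length p - 1}. Qpath E q (c # p) (p ! j))"
    by (subst prod.shift_bounds_Suc_ivl) simp
  also have "\<dots> = Qpath E q (c # p) (p ! 0) * (\<Prod>j\<in>{1..<length p - 1}. Qpath E q (c # p) (p ! j))"
    using assms(1) by (subst prod.atLeast_Suc_lessThan) auto
  also have "(\<Prod>j\<in>{1..<length p - 1}. Qpath E q (c # p) (p ! j)) = Qstar E q p"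
    unfolding Qstar_def using interior by (intro prod.cong) auto
  finally show ?thesis using ne by (simp add: hd_conv_nth)
qed

section \<open>Paths and parents in a tree\<close>

locale cell_tree =
  fixes C :: "'a set" and E :: "'a set set"
  assumes tree: "tree C E"
begin

lemma finite_cells: "finite C"
  using tree unfolding tree_def graph_def by auto

lemma edgeD: "e \<in> E \<Longrightarrow> e \<subseteq> C \<and> card e = 2"
  using tree unfolding tree_def graph_def by auto

lemma edge_endpoints_neq: "{x, y} \<in> E \<Longrightarrow> x \<noteq> y"
  using edgeD[of "{x, y}"] by auto

lemma edge_obtain_other_end:
  assumes "e \<in> E" "v \<in> e"
  obtains c where "e = {v, c}" "c \<noteq> v" "c \<in> C"
proof -
  obtain a b where ab: "e = {a, b}" "a \<noteq> b" using edgeD[OF assms(1)] by (meson card_2_iff)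
  moreover have "a \<in> C" "b \<in> C" using ab edgeD[OF assms(1)] by auto
  ultimately show ?thesis using that assms(2) by (cases "a = v") (auto simp: insert_commute)
qed

lemma finite_edges: "finite E"
proof -
  have "E \<subseteq> Pow C" using edgeD by auto
  then show ?thesis using finite_cells by (meson finite_Pow_iff finite_subset)
qed

abbreviation \<gamma> :: "'a \<Rightarrow> 'a \<Rightarrow> 'a list" where
  "\<gamma> x y \<equiv> gamma C E x y"

lemma ex1_path: "x \<in> C \<Longrightarrow> y \<in> C \<Longrightarrow> \<exists>!p. is_path C E p \<and> hd p = x \<and> last p = y"
  using tree unfolding tree_def by auto

lemma gamma_path: "x \<in> C \<Longrightarrow> y \<in> C \<Longrightarrow> is_path C E (\<gamma> x y) \<and> hd (\<gamma> x y) = x \<and> last (\<gamma> x y) = y"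
  unfolding gamma_def using theI'[OF ex1_path] by blast

lemma gamma_eqI:
  assumes "is_path C E p" "hd p = x" "last p = y"
  shows "\<gamma> x y = p"
proof -
  have "x \<in> C" "y \<in> C" using assms unfolding is_path_iff by auto
  then show ?thesis using assms gamma_path ex1_path by blast
qed

lemma gamma_not_Nil: "x \<in> C \<Longrightarrow> y \<in> C \<Longrightarrow> \<gamma> x y \<noteq> []"
  using gamma_path unfolding is_path_iff by auto

lemma set_gamma_subset: "x \<in> C \<Longrightarrow> y \<in> C \<Longrightarrow> set (\<gamma> x y) \<subseteq> C"
  using gamma_path unfolding is_path_iff by auto

lemma edges_gamma_subset: "x \<in> C \<Longrightarrow> y \<in> C \<Longrightarrow> set (edge_list (\<gamma> x y)) \<subseteq> E"
  using gamma_path unfolding is_path_iff by auto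

lemma ends_in_gamma: "x \<in> C \<Longrightarrow> y \<in> C \<Longrightarrow> x \<in> set (\<gamma> x y) \<and> y \<in> set (\<gamma> x y)"
  using gamma_path gamma_not_Nil by (metis hd_in_set last_in_set)

lemma is_path_infix: "is_path C E (a @ s @ c) \<Longrightarrow> s \<noteq> [] \<Longrightarrow> is_path C E s"
  unfolding is_path_iff using edge_list_infix[of s a c] by auto

lemma distinct_if_is_path:
  assumes p: "is_path C E p"
  shows "distinct p"
proof (rule ccontr)
  assume "\<not> distinct p"
  then obtain xs ys zs y where w: "p = xs @ [y] @ ys @ [y] @ zs" using not_distinct_decomp by blast
  then have "is_path C E (y # ys @ [y])" using is_path_infix[of xs "y # ys @ [y]" zs] p by simp
  then have "\<gamma> y y = y # ys @ [y]" by (intro gamma_eqI) auto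
  moreover have "y \<in> C" using p w unfolding is_path_iff by auto
  then have "\<gamma> y y = [y]" by (intro gamma_eqI) (auto simp: is_path_iff)
  ultimately show False by simp
qed

lemma distinct_gamma: "x \<in> C \<Longrightarrow> y \<in> C \<Longrightarrow> distinct (\<gamma> x y)"
  using gamma_path distinct_if_is_path by blast

lemma gamma_sym:
  assumes "x \<in> C" "y \<in> C"
  shows "\<gamma> y x = rev (\<gamma> x y)"
proof -
  have "is_path C E (rev (\<gamma> x y))"
    using gamma_path[OF assms] unfolding is_path_iff by (auto simp: edge_list_rev)
  then show ?thesis using gamma_path[OF assms] by (intro gamma_eqI) (auto simp: hd_rev last_rev)
qed

lemma edges_gamma_sym: "x \<in> C \<Longrightarrow> y \<in> C \<Longrightarrow> set (edge_list (\<gamma> y x)) = set (edge_list (\<gamma> x y))"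
  using gamma_sym[of x y] by (simp add: edge_list_rev)

lemma gamma_within_walk:
  assumes "walk C E w"
  shows "set (edge_list (\<gamma> (hd w) (last w))) \<subseteq> set (edge_list w)"
    "set (\<gamma> (hd w) (last w)) \<subseteq> set w"
proof -
  obtain w' where w': "walk C E w'" "distinct w'" "hd w' = hd w" "last w' = last w"
    "set w' \<subseteq> set w" "set (edge_list w') \<subseteq> set (edge_list w)"
    using walk_shortcut[OF assms] by blast
  then have "\<gamma> (hd w) (last w) = w'" using is_path_if_distinct_walk by (intro gamma_eqI) auto
  then show "set (edge_list (\<gamma> (hd w) (last w))) \<subseteq> set (edge_list w)"
    "set (\<gamma> (hd w) (last w)) \<subseteq> set w" using w' by simp_all
qed

lemma gamma_prefix:
  assumes "x \<in> C" "y \<in> C" "\<gamma> x y = a @ c # b"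
  shows "\<gamma> x c = a @ [c]"
proof (rule gamma_eqI)
  show "is_path C E (a @ [c])" using is_path_infix[of "[]" "a @ [c]" b] gamma_path[OF assms(1,2)] assms(3) by simp
  show "hd (a @ [c]) = x" using gamma_path[OF assms(1,2)] assms(3) by (cases a) auto
qed simp

lemma gamma_suffix:
  assumes "x \<in> C" "y \<in> C" "\<gamma> x y = a @ c # b"
  shows "\<gamma> c y = c # b"
proof (rule gamma_eqI)
  show "is_path C E (c # b)" using is_path_infix[of a "c # b" "[]"] gamma_path[OF assms(1,2)] assms(3) by simp
  show "last (c # b) = y" using gamma_path[OF assms(1,2)] assms(3) by (metis last_appendR list.distinct(1))
qed simp

lemma gamma_edge:
  assumes "{x, y} \<in> E"
  shows "\<gamma> x y = [x, y]"
proof (rule gamma_eqI)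
  have "x \<in> C" "y \<in> C" "x \<noteq> y" using edgeD[OF assms] edge_endpoints_neq[OF assms] by auto
  then show "is_path C E [x, y]" using assms by (intro is_path_if_distinct_walk) (auto simp: walk_def)
qed auto

lemma no_chord:
  assumes "is_path C E (a @ x # b @ y # c)" "{x, y} \<in> E"
  shows "b = []"
proof -
  have "is_path C E (x # b @ [y])" using is_path_infix[of a "x # b @ [y]" c] assms(1) by simp
  then have "\<gamma> x y = x # b @ [y]" by (intro gamma_eqI) auto
  then show "b = []" using gamma_edge[OF assms(2)] by simp
qed

text \<open>Two such cells would make the edge a chord of the path.\<close>

lemma incident_edge_unique_cell:
  assumes p: "is_path C E p" and \<epsilon>: "\<epsilon> \<in> E" "\<epsilon> \<notin> set (edge_list p)"
    and u: "u \<in> set p" "u \<in> \<epsilon>" and u': "u' \<in> set p" "u' \<in> \<epsilon>"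
  shows "u = u'"
proof (rule ccontr)
  assume ne: "u \<noteq> u'"
  obtain a b where "\<epsilon> = {a, b}" "a \<noteq> b" using edgeD[OF \<epsilon>(1)] by (meson card_2_iff)
  then have eps: "\<epsilon> = {u, u'}" using u u' ne by auto
  have no_split: False if pp: "p = a @ x # b @ y # c" and xy: "\<epsilon> = {x, y}" for a b c x y
  proof -
    have "b = []" using no_chord p \<epsilon>(1) pp xy by blast
    then have "edge_list p = edge_list (a @ [x]) @ {x, y} # edge_list (y # c)"
      using pp edge_list_append[of a x "y # c"] by simp
    then show False using \<epsilon>(2) xy by simp
  qed
  obtain a b c where "p = a @ u # b @ u' # c \<or> p = a @ u' # b @ u # c"
    using distinct_split_two[OF distinct_if_is_path[OF p] u(1) u'(1) ne] by blast
  then show False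
    using no_split[of a u b u' c] no_split[of a u' b u c] eps by (metis insert_commute)
qed

definition parent :: "'a \<Rightarrow> 'a \<Rightarrow> 'a" where
  "parent r v = \<gamma> v r ! 1"

lemma gamma_via_parent:
  assumes "r \<in> C" "v \<in> C" "v \<noteq> r"
  shows "\<gamma> v r = v # \<gamma> (parent r v) r" "parent r v \<in> C" "{v, parent r v} \<in> E" "parent r v \<noteq> v"
proof -
  obtain t where t: "\<gamma> v r = v # t"
    using gamma_path[OF assms(2,1)] gamma_not_Nil[OF assms(2,1)] by (cases "\<gamma> v r") auto
  then obtain p t' where pt: "t = p # t'" using gamma_path[OF assms(2,1)] assms(3) by (cases t) auto
  have "\<gamma> p r = t" using gamma_suffix[OF assms(2,1), of "[v]" p t'] t pt by simp
  moreover have "parent r v = p" unfolding parent_def t pt by simp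
  ultimately show "\<gamma> v r = v # \<gamma> (parent r v) r" using t by simp
  show "{v, parent r v} \<in> E" using edges_gamma_subset[OF assms(2,1)] t pt \<open>parent r v = p\<close> by auto
  show "parent r v \<in> C" using set_gamma_subset[OF assms(2,1)] t pt \<open>parent r v = p\<close> by auto
  show "parent r v \<noteq> v" using distinct_gamma[OF assms(2,1)] t pt \<open>parent r v = p\<close> by auto
qed

lemma length_gamma_ge_2:
  assumes "r \<in> C" "v \<in> C" "v \<noteq> r"
  shows "length (\<gamma> v r) \<ge> 2"
proof -
  have "\<gamma> (parent r v) r \<noteq> []" using gamma_not_Nil gamma_via_parent(2)[OF assms] assms(1) by blast
  then show ?thesis using gamma_via_parent(1)[OF assms] by (cases "\<gamma> (parent r v) r") auto
qed

lemma parent_parent_neq: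
  assumes "r \<in> C" "v \<in> C" "v \<noteq> r" "parent r v \<noteq> r"
  shows "parent r (parent r v) \<noteq> v"
proof
  assume "parent r (parent r v) = v"
  then have "\<gamma> (parent r v) r = parent r v # \<gamma> v r"
    using gamma_via_parent[OF assms(1) _ assms(4)] gamma_via_parent(2)[OF assms(1-3)] by simp
  then have "length (\<gamma> v r) = length (\<gamma> v r) + 2" using gamma_via_parent(1)[OF assms(1-3)] by simp
  then show False by simp
qed

lemma parent_of_neighbour:
  assumes r: "r \<in> C" and v: "v \<in> C" "v \<noteq> r" and c: "{v, c} \<in> E" "c \<noteq> parent r v"
  shows "c \<noteq> r" "parent r c = v" "\<gamma> c r = c # \<gamma> v r"
proof -
  have cC: "c \<in> C" using edgeD[OF c(1)] by auto
  have nin: "c \<notin> set (\<gamma> v r)"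
  proof
    assume "c \<in> set (\<gamma> v r)"
    then obtain xs ys where s: "\<gamma> v r = xs @ c # ys" by (meson split_list)
    have "xs @ [c] = [v, c]" using gamma_prefix[OF v(1) r s] gamma_edge[OF c(1)] by simp
    then have "parent r v = c" unfolding parent_def s by auto
    then show False using c(2) by simp
  qed
  have "walk C E (c # \<gamma> v r)" using gamma_path[OF v(1) r] cC c(1) gamma_not_Nil[OF v(1) r]
    unfolding walk_def is_path_iff by (auto simp: edge_list_Cons insert_commute)
  then have "is_path C E (c # \<gamma> v r)"
    using nin distinct_gamma[OF v(1) r] by (intro is_path_if_distinct_walk) auto
  then show path: "\<gamma> c r = c # \<gamma> v r"
    using gamma_path[OF v(1) r] gamma_not_Nil[OF v(1) r] by (intro gamma_eqI) auto
  show "c \<noteq> r" using nin ends_in_gamma[OF v(1) r] by auto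
  show "parent r c = v" unfolding parent_def path
    using gamma_path[OF v(1) r] gamma_not_Nil[OF v(1) r] by (cases "\<gamma> v r") auto
qed

lemma edges_gamma_at_start:
  assumes "r \<in> C" "v \<in> C" "v \<noteq> r"
  shows "{e \<in> set (edge_list (\<gamma> v r)). v \<in> e} = {{v, parent r v}}"
proof -
  note via = gamma_via_parent[OF assms]
  have "v \<notin> set (\<gamma> (parent r v) r)" using distinct_gamma[OF assms(2,1)] via(1) by simp
  moreover have "edge_list (\<gamma> v r) = {v, parent r v} # edge_list (\<gamma> (parent r v) r)"
    using via gamma_path[OF via(2) assms(1)] gamma_not_Nil[OF via(2) assms(1)]
    by (simp add: edge_list_Cons)
  ultimately show ?thesis using subset_if_in_edge_list by fastforce
qed

lemma parent_change_root:
  assumes s: "s \<in> C" and r: "r \<in> C" and v: "v \<in> C" "v \<notin> set (\<gamma> s r)"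
  shows "parent r v = parent s v"
  using v
proof (induction "length (\<gamma> v r)" arbitrary: v rule: less_induct)
  case less
  show ?case
  proof (rule ccontr)
    assume neq: "parent r v \<noteq> parent s v"
    have vr: "v \<noteq> r" "v \<noteq> s" using less.prems(2) ends_in_gamma[OF s r] by auto
    define a where "a = parent r v"
    note via = gamma_via_parent[OF r less.prems(1) vr(1), folded a_def]
    have child: "a \<noteq> s" "parent s a = v" "\<gamma> a s = a # \<gamma> v s"
      using parent_of_neighbour[OF s less.prems(1) vr(2) via(3)] neq a_def by auto
    show False
    proof (cases "a \<in> set (\<gamma> s r)")
      case True
      then obtain xs ys where split: "\<gamma> s r = xs @ a # ys" by (meson split_list)
      have "\<gamma> a s = a # rev xs" using gamma_prefix[OF s r split] gamma_sym[OF s via(2)] by simp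
      then have "\<gamma> v s = rev xs" using child(3) by simp
      then have "v \<in> set xs" using ends_in_gamma[OF less.prems(1) s] by simp
      then show False using less.prems(2) split by simp
    next
      case False
      have "a \<noteq> r" using False ends_in_gamma[OF s r] by auto
      then have "parent r a \<noteq> parent s a"
        using parent_parent_neq[OF r less.prems(1) vr(1)] child(2) a_def by simp
      moreover have "length (\<gamma> a r) < length (\<gamma> v r)" using via(1) by simp
      ultimately show False using less.hyps via(2) False by blast
    qed
  qed
qed

definition child_edges :: "'a \<Rightarrow> 'a \<Rightarrow> 'a set set" where
  "child_edges r v = {e\<in>E. v \<in> e} - {{v, parent r v}}"

lemma finite_child_edges: "finite (child_edges r v)"
  unfolding child_edges_def using finite_edges by auto

lemma valency_eq_card_child_edges:
  assumes "r \<in> C" "v \<in> C" "v \<noteq> r"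
  shows "valency E v = card (child_edges r v) + 1"
proof -
  have "finite {e\<in>E. v \<in> e}" using finite_edges by simp
  moreover have "{v, parent r v} \<in> {e\<in>E. v \<in> e}" using gamma_via_parent[OF assms] by auto
  ultimately show ?thesis unfolding valency_def child_edges_def using card_Suc_Diff1 by fastforce
qed

lemma edges_off_gamma_at_start:
  assumes "r \<in> C" "v \<in> C" "v \<noteq> r"
  shows "{\<epsilon>\<in>E. v \<in> \<epsilon> \<and> \<epsilon> \<notin> path_edges (\<gamma> v r)} = child_edges r v"
  using edges_gamma_at_start[OF assms] gamma_via_parent(3)[OF assms] edges_gamma_subset[OF assms(2,1)]
  unfolding child_edges_def path_edges_eq by blast

lemma children_bij:
  assumes r: "r \<in> C" and v: "v \<in> C" "v \<noteq> r"
  shows "bij_betw (\<lambda>c. {v, c}) {c \<in> C - {r}. parent r c = v} (child_edges r v)"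
proof (rule bij_betw_imageI)
  show "inj_on (\<lambda>c. {v, c}) {c \<in> C - {r}. parent r c = v}"
    using gamma_via_parent(4)[OF r] by (intro inj_onI) (auto simp: doubleton_eq_iff)
  show "(\<lambda>c. {v, c}) ` {c \<in> C - {r}. parent r c = v} = child_edges r v"
  proof (intro set_eqI iffI)
    fix e assume "e \<in> (\<lambda>c. {v, c}) ` {c \<in> C - {r}. parent r c = v}"
    then obtain c where c: "c \<in> C" "c \<noteq> r" "parent r c = v" "e = {v, c}" by blast
    have "c \<noteq> parent r v" using parent_parent_neq[OF r v] c by auto
    moreover have "{c, v} \<in> E" "c \<noteq> v" using gamma_via_parent[OF r c(1,2)] c(3) by auto
    ultimately show "e \<in> child_edges r v"
      unfolding child_edges_def using c(4) by (auto simp: insert_commute doubleton_eq_iff)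
  next
    fix e assume e: "e \<in> child_edges r v"
    then have "e \<in> E" "v \<in> e" unfolding child_edges_def by auto
    then obtain c where c: "e = {v, c}" "c \<in> C" by (meson edge_obtain_other_end)
    then have "c \<noteq> parent r v" using e unfolding child_edges_def by auto
    then have "c \<noteq> r" "parent r c = v"
      using parent_of_neighbour[OF r v] c \<open>e \<in> E\<close> by auto
    then show "e \<in> (\<lambda>c. {v, c}) ` {c \<in> C - {r}. parent r c = v}" using c by blast
  qed
qed

lemma Qstar_gamma_child:
  assumes r: "r \<in> C" and v: "v \<in> C" "v \<noteq> r" and c: "c \<in> C" "c \<noteq> r" "parent r c = v"
  shows "Qstar E q (\<gamma> c r) = Qstar E q (\<gamma> v r) * (\<Prod>t\<in>child_edges r v - {{v, c}}. q t v)"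
proof -
  have path: "\<gamma> c r = c # \<gamma> v r" using gamma_via_parent(1)[OF r c(1,2)] c(3) by simp
  have ne: "\<gamma> v r \<noteq> []" and hd: "hd (\<gamma> v r) = v" using gamma_path[OF v(1) r] gamma_not_Nil[OF v(1) r] by auto
  have "{\<epsilon>\<in>E. v \<in> \<epsilon> \<and> \<epsilon> \<notin> path_edges (c # \<gamma> v r)} = child_edges r v - {{v, c}}"
    using edges_off_gamma_at_start[OF r v] ne hd
    by (auto simp: path_edges_eq edge_list_Cons insert_commute)
  then show ?thesis
    using Qstar_Cons[OF length_gamma_ge_2[OF r v]] distinct_gamma[OF c(1) r] path hd
    unfolding Qpath_def by simp
qed

lemma sum_children_Qstar:
  assumes r: "r \<in> C" and v: "v \<in> C" "v \<noteq> r"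
  shows "(\<Sum>c | c \<in> C - {r} \<and> parent r c = v. Qstar E q (\<gamma> c r))
       = Qstar E q (\<gamma> v r) * (\<Sum>e\<in>child_edges r v. \<Prod>t\<in>child_edges r v - {e}. q t v)"
proof -
  have "(\<Sum>c | c \<in> C - {r} \<and> parent r c = v. Qstar E q (\<gamma> c r))
      = (\<Sum>c | c \<in> C - {r} \<and> parent r c = v. Qstar E q (\<gamma> v r) * (\<Prod>t\<in>child_edges r v - {{v, c}}. q t v))"
    using Qstar_gamma_child[OF r v] by (intro sum.cong) auto
  also have "\<dots> = (\<Sum>e\<in>child_edges r v. Qstar E q (\<gamma> v r) * (\<Prod>t\<in>child_edges r v - {e}. q t v))"
    using sum.reindex_bij_betw[OF children_bij[OF r v]] by (simp add: set_diff_eq)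
  finally show ?thesis by (simp add: sum_distrib_left)
qed

lemma sum_over_parents:
  fixes w :: "'a \<Rightarrow> 'b::ab_group_add"
  assumes "r \<in> C"
  shows "(\<Sum>v\<in>C - {r}. \<Sum>c | c \<in> C - {r} \<and> parent r c = v. w c)
       = (\<Sum>c\<in>C - {r}. w c) - (\<Sum>c | c \<in> C - {r} \<and> parent r c = r. w c)"
proof -
  have fin: "finite (C - {r})" using finite_cells by simp
  have "(\<Sum>v\<in>C - {r}. \<Sum>c | c \<in> C - {r} \<and> parent r c = v. w c)
      = (\<Sum>v\<in>C - {r}. \<Sum>c\<in>C - {r}. if parent r c = v then w c else 0)"
    using fin by (simp add: sum.inter_filter[symmetric] set_diff_eq conj_ac)
  also have "\<dots> = (\<Sum>c\<in>C - {r}. if parent r c \<in> C - {r} then w c else 0)"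
    using fin by (subst sum.swap) simp
  also have "\<dots> = (\<Sum>c\<in>C - {r}. w c - (if parent r c = r then w c else 0))"
    using gamma_via_parent(2)[OF assms] by (intro sum.cong) auto
  also have "\<dots> = (\<Sum>c\<in>C - {r}. w c) - (\<Sum>c | c \<in> C - {r} \<and> parent r c = r. w c)"
    using fin by (simp add: sum_subtractf sum.inter_filter[symmetric] set_diff_eq)
  finally show ?thesis .
qed

lemma prod_incident_eq_prod_Qpath:
  assumes p: "is_path C E p"
  shows "(\<Prod>\<epsilon>\<in>incident E p. q_path q \<epsilon> p) = (\<Prod>u\<in>set p. Qpath E q p u)"
proof -
  define Inc where "Inc u = {\<epsilon>\<in>E. u \<in> \<epsilon> \<and> \<epsilon> \<notin> path_edges p}" for u
  have unique: "u = u'" if "u \<in> set p" "u' \<in> set p" "\<epsilon> \<in> Inc u" "u' \<in> \<epsilon>" for u u' \<epsilon>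
    using incident_edge_unique_cell[OF p] that unfolding Inc_def path_edges_eq by blast
  have "(\<Prod>\<epsilon>\<in>incident E p. q_path q \<epsilon> p) = (\<Prod>u\<in>set p. \<Prod>\<epsilon>\<in>Inc u. q_path q \<epsilon> p)"
  proof -
    have "incident E p = (\<Union>u\<in>set p. Inc u)" unfolding incident_def Inc_def by auto
    moreover have "Inc u \<inter> Inc u' = {}" if "u \<in> set p" "u' \<in> set p" "u \<noteq> u'" for u u'
      using unique that unfolding Inc_def by blast
    ultimately show ?thesis using finite_edges by (simp add: prod.UNION_disjoint Inc_def)
  qed
  also have "\<dots> = (\<Prod>u\<in>set p. \<Prod>\<epsilon>\<in>Inc u. q \<epsilon> u)"
  proof (intro prod.cong refl)
    fix u \<epsilon> assume "u \<in> set p" "\<epsilon> \<in> Inc u"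
    then have "(SOME u'. u' \<in> set p \<and> u' \<in> \<epsilon>) = u" using unique unfolding Inc_def by (intro some_equality) auto
    then show "q_path q \<epsilon> p = q \<epsilon> u" unfolding q_path_def by simp
  qed
  finally show ?thesis unfolding Inc_def Qpath_def .
qed

end

lemma tree_if_hom_into_tree:
  assumes G: "graph C' E'" and T: "tree C E" and inj: "inj_on \<rho> C'" and img: "\<rho> ` C' \<subseteq> C"
    and hom: "\<forall>e\<in>E'. \<rho> ` e \<in> E" and h: "h \<in> C'"
    and conn: "\<forall>x\<in>C'. \<exists>w. walk C' E' w \<and> hd w = x \<and> last w = h"
  shows "tree C' E'"
proof -
  interpret cell_tree C E by (rule cell_tree.intro[OF T])
  have ex: "\<exists>p. is_path C' E' p \<and> hd p = x \<and> last p = y" if xy: "x \<in> C'" "y \<in> C'" for x y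
  proof -
    obtain w1 where w1: "walk C' E' w1" "hd w1 = x" "last w1 = h" using conn xy by blast
    obtain w2 where w2: "walk C' E' w2" "hd w2 = y" "last w2 = h" using conn xy by blast
    have w2': "walk C' E' (rev w2)" "hd (rev w2) = h" "last (rev w2) = y"
      using w2 by (auto simp: walk_def edge_list_rev hd_rev last_rev)
    note W = walk_append[OF w1(1) w2'(1)] 
    obtain w' where "walk C' E' w'" "distinct w'" "hd w' = x" "last w' = y"
      using walk_shortcut[OF W(1)] W(2,3) w1 w2' by metis
    then show ?thesis using is_path_if_distinct_walk by blast
  qed
  have map_path: "is_path C E (map \<rho> p)" if p: "is_path C' E' p" for p
  proof -
    have "set (edge_list p) \<subseteq> Pow C'" using p G unfolding is_path_iff graph_def by auto
    then have "inj_on (image \<rho>) (set (edge_list p))"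
      using inj_on_image_Pow[OF inj] inj_on_subset by blast
    then show ?thesis using p img hom unfolding is_path_iff edge_list_map
      by (auto simp: distinct_map)
  qed
  have unique: "p = p'" if p: "is_path C' E' p" "hd p = x" "last p = y"
    and p': "is_path C' E' p'" "hd p' = x" "last p' = y" for p p' x y
  proof -
    have "p \<noteq> []" "p' \<noteq> []" using p(1) p'(1) unfolding is_path_iff by auto
    then have "map \<rho> p = map \<rho> p'"
      using gamma_eqI[OF map_path[OF p(1)]] gamma_eqI[OF map_path[OF p'(1)]] p p'
      by (simp add: hd_map last_map)
    moreover have "inj_on \<rho> (set p \<union> set p')"
      using p p' inj unfolding is_path_iff by (meson Un_least inj_on_subset)
    ultimately show ?thesis by (rule map_inj_on)
  qed
  show ?thesis unfolding tree_def using G ex unique by blast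
qed

section \<open>Arrow terms\<close>

locale arrow_tree = cell_tree "V \<union> A" E for V A :: "'a set" and E +
  assumes disjoint: "V \<inter> A = {}" and arrow_valency: "\<forall>\<alpha>\<in>A. valency E \<alpha> = 1"
begin

lemma arrow_edge:
  assumes "\<alpha> \<in> A"
  obtains e where "{e\<in>E. \<alpha> \<in> e} = {e}"
  using arrow_valency assms unfolding valency_def by (metis card_1_singletonE)

lemma child_edges_arrow:
  assumes "r \<in> V \<union> A" "\<alpha> \<in> A" "\<alpha> \<noteq> r"
  shows "child_edges r \<alpha> = {}"
proof -
  obtain e where e: "{e\<in>E. \<alpha> \<in> e} = {e}" using arrow_edge[OF assms(2)] .
  moreover have "{\<alpha>, parent r \<alpha>} \<in> {e\<in>E. \<alpha> \<in> e}" using gamma_via_parent(3)[OF assms(1) _ assms(3)] assms(2) by auto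
  ultimately show ?thesis unfolding child_edges_def by auto
qed

lemma arrow_edge_in_gamma:
  assumes \<alpha>: "\<alpha> \<in> A" and x: "x \<in> V \<union> A" "x \<noteq> \<alpha>" and e: "e \<in> E" "\<alpha> \<in> e"
  shows "e \<in> set (edge_list (\<gamma> x \<alpha>))"
proof -
  have \<alpha>C: "\<alpha> \<in> V \<union> A" using \<alpha> by simp
  obtain e0 where e0: "{e'\<in>E. \<alpha> \<in> e'} = {e0}" using arrow_edge[OF \<alpha>] .
  have "{e \<in> set (edge_list (\<gamma> \<alpha> x)). \<alpha> \<in> e} = {{\<alpha>, parent x \<alpha>}}"
    using edges_gamma_at_start[OF x(1) \<alpha>C x(2)[symmetric]] .
  then have "{\<alpha>, parent x \<alpha>} \<in> set (edge_list (\<gamma> x \<alpha>))"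
    using edges_gamma_sym[OF x(1) \<alpha>C] by blast
  moreover have "{\<alpha>, parent x \<alpha>} \<in> {e'\<in>E. \<alpha> \<in> e'}" "e \<in> {e'\<in>E. \<alpha> \<in> e'}"
    using e gamma_via_parent(3)[OF x(1) \<alpha>C x(2)[symmetric]] by auto
  ultimately show ?thesis unfolding e0 by simp
qed

lemma arrow_end_of_path:
  assumes \<alpha>: "\<alpha> \<in> A" and p: "is_path (V \<union> A) E p" "\<alpha> \<in> set p"
  shows "\<alpha> = hd p \<or> \<alpha> = last p"
proof (rule ccontr)
  assume inner: "\<not> (\<alpha> = hd p \<or> \<alpha> = last p)"
  obtain xs ys where split: "p = xs @ \<alpha> # ys" using p(2) by (meson split_list)
  then have "xs \<noteq> []" "ys \<noteq> []" using inner by auto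
  then obtain xs' x y ys' where xy: "xs = xs' @ [x]" "ys = y # ys'"
    by (metis append_butlast_last_id list.exhaust)
  have edges: "edge_list p = edge_list (xs' @ [x]) @ {x, \<alpha>} # {\<alpha>, y} # edge_list (y # ys')"
    using edge_list_append[of "xs' @ [x]" \<alpha> "y # ys'"] edge_list_append[of xs' x "[\<alpha>, y] @ ys'"] split xy
    by simp
  have "x \<noteq> y" using distinct_if_is_path[OF p(1)] split xy by auto
  then have ne: "{x, \<alpha>} \<noteq> {\<alpha>, y}" by (auto simp: doubleton_eq_iff)
  have "{x, \<alpha>} \<in> {e'\<in>E. \<alpha> \<in> e'}" "{\<alpha>, y} \<in> {e'\<in>E. \<alpha> \<in> e'}"
    using p(1) edges unfolding is_path_iff by auto
  moreover obtain e where "{e'\<in>E. \<alpha> \<in> e'} = {e}" using arrow_edge[OF \<alpha>] .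
  ultimately show False using ne by simp
qed

lemma xva_eq:
  assumes r: "r \<in> A" and v: "v \<in> V \<union> A" "v \<noteq> r"
  shows "xva V A E f q v r = f r * Qstar E q (\<gamma> v r) * (\<Prod>e\<in>child_edges r v. q e v)"
proof -
  have rC: "r \<in> V \<union> A" using r by simp
  note path = gamma_path[OF v(1) rC]
  have "{\<epsilon>\<in>E. r \<in> \<epsilon> \<and> \<epsilon> \<notin> path_edges (\<gamma> v r)} = {}"
    using arrow_edge_in_gamma[OF r v] edges_gamma_sym[OF v(1) rC] unfolding path_edges_eq by blast
  then have "Qpath E q (\<gamma> v r) r = 1" unfolding Qpath_def by (simp only: prod.empty)
  moreover have "Qpath E q (\<gamma> v r) v = (\<Prod>e\<in>child_edges r v. q e v)"
    unfolding Qpath_def edges_off_gamma_at_start[OF rC v] ..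
  moreover have "(\<Prod>u\<in>set (\<gamma> v r). Qpath E q (\<gamma> v r) u)
      = Qpath E q (\<gamma> v r) v * Qstar E q (\<gamma> v r) * Qpath E q (\<gamma> v r) r"
    using prod_set_path_split[OF distinct_gamma[OF v(1) rC] length_gamma_ge_2[OF rC v]] path
    unfolding Qstar_def by simp
  ultimately show ?thesis
    unfolding xva_def prod_incident_eq_prod_Qpath[OF conjunct1[OF path]] by simp
qed

lemma sum_root_children_Qstar:
  assumes r: "r \<in> A"
  shows "(\<Sum>c | c \<in> (V \<union> A) - {r} \<and> parent r c = r. Qstar E q (\<gamma> c r)) = 1"
proof -
  have rC: "r \<in> V \<union> A" using r by simp
  obtain e where e: "{e'\<in>E. r \<in> e'} = {e}" using arrow_edge[OF r] .
  then obtain n where n: "e = {r, n}" "n \<in> V \<union> A" by (metis (no_types, lifting) edge_obtain_other_end mem_Collect_eq singletonI)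
  have "{r, n} \<in> E" using e n by auto
  then have gn: "\<gamma> n r = [n, r]" and "n \<noteq> r" using gamma_edge[of n r] edge_endpoints_neq by (auto simp: insert_commute)
  have "{c. c \<in> (V \<union> A) - {r} \<and> parent r c = r} = {n}"
  proof (intro set_eqI iffI)
    fix c assume "c \<in> {c. c \<in> (V \<union> A) - {r} \<and> parent r c = r}"
    then have "{c, r} \<in> {e'\<in>E. r \<in> e'}" "c \<noteq> r" using gamma_via_parent(3)[OF rC, of c] by auto
    then show "c \<in> {n}" unfolding e n by (auto simp: doubleton_eq_iff)
  qed (use n gn \<open>n \<noteq> r\<close> in \<open>auto simp: parent_def\<close>)
  then show ?thesis using gn by (simp add: Qstar_def)
qed

lemma xva_valency_eq:
  assumes r: "r \<in> A" and v: "v \<in> V \<union> A" "v \<noteq> r"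
  shows "xva V A E f q v r * (int (valency E v) - 2)
    = (\<Sum>c | c \<in> (V \<union> A) - {r} \<and> parent r c = v. f r * Qstar E q (\<gamma> c r))
      - f r * Qstar E q (\<gamma> v r)
      + f r * Qstar E q (\<gamma> v r) * defect (child_edges r v) (\<lambda>e. q e v)"
proof -
  have rC: "r \<in> V \<union> A" using r by simp
  show ?thesis
    unfolding xva_eq[OF r v] valency_eq_card_child_edges[OF rC v] sum_distrib_left[symmetric]
      sum_children_Qstar[OF rC v] defect_def
    by (simp add: algebra_simps)
qed

definition arrow_term :: "('a \<Rightarrow> int) \<Rightarrow> ('a set \<Rightarrow> 'a \<Rightarrow> int) \<Rightarrow> 'a set \<Rightarrow> 'a \<Rightarrow> int" where
  "arrow_term f q Y r = f r - (\<Sum>\<alpha>\<in>Y - {r}. f r * Qstar E q (\<gamma> \<alpha> r))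
     - (\<Sum>v\<in>V. f r * Qstar E q (\<gamma> v r) * defect (child_edges r v) (\<lambda>e. q e v))"

lemma arrow_contribution:
  assumes r: "r \<in> A - A0 A f"
  shows "(\<Sum>v\<in>V \<union> A0 A f. xva V A E f q v r * (int (valency E v) - 2)) = - arrow_term f q (A - A0 A f) r"
proof -
  have rA: "r \<in> A" and rC: "r \<in> V \<union> A" using r by auto
  define w where "w c = f r * Qstar E q (\<gamma> c r)" for c
  define K where "K v = xva V A E f q v r * (int (valency E v) - 2)" for v
  define D where "D v = w v * defect (child_edges r v) (\<lambda>e. q e v)" for v
  have fin: "finite V" "finite A" using finite_cells by auto
  have K: "K v = (\<Sum>c | c \<in> (V \<union> A) - {r} \<and> parent r c = v. w c) - w v + D v" if "v \<in> (V \<union> A) - {r}" for v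
    using xva_valency_eq[OF rA, of v f q] that unfolding K_def w_def D_def by auto
  have arrows: "D \<alpha> = 0" "K \<alpha> = - w \<alpha>" if \<alpha>: "\<alpha> \<in> A - {r}" for \<alpha>
  proof -
    have "child_edges r \<alpha> = {}" using child_edges_arrow[OF rC] \<alpha> by blast
    moreover from this have "{c. c \<in> (V \<union> A) - {r} \<and> parent r c = \<alpha>} = {}"
      using bij_betw_imp_surj_on[OF children_bij[OF rC, of \<alpha>]] \<alpha> by auto
    ultimately show "D \<alpha> = 0" "K \<alpha> = - w \<alpha>" using K[of \<alpha>] \<alpha> unfolding D_def
      by (simp_all only:) simp_all
  qed
  have "(\<Sum>v\<in>(V \<union> A) - {r}. K v) = - f r + (\<Sum>v\<in>(V \<union> A) - {r}. D v)"
    using sum_over_parents[OF rC, of w] sum_root_children_Qstar[OF rA, of q]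
    by (simp add: K sum.distrib sum_subtractf w_def sum_distrib_left[symmetric])
  also have "(\<Sum>v\<in>(V \<union> A) - {r}. D v) = (\<Sum>v\<in>V. D v)"
    using fin disjoint rA arrows(1) by (intro sum.mono_neutral_right) auto
  finally have total: "(\<Sum>v\<in>(V \<union> A) - {r}. K v) = - f r + (\<Sum>v\<in>V. D v)" .
  have "(V \<union> A) - {r} = (V \<union> A0 A f) \<union> ((A - A0 A f) - {r})"
    "(V \<union> A0 A f) \<inter> ((A - A0 A f) - {r}) = {}"
    using r disjoint unfolding A0_def by auto
  then have "(\<Sum>v\<in>(V \<union> A) - {r}. K v) = (\<Sum>v\<in>V \<union> A0 A f. K v) + (\<Sum>v\<in>(A - A0 A f) - {r}. K v)"
    using fin by (simp add: sum.union_disjoint A0_def)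
  moreover have "(\<Sum>v\<in>(A - A0 A f) - {r}. K v) = - (\<Sum>\<alpha>\<in>(A - A0 A f) - {r}. w \<alpha>)"
    using arrows(2) by (simp add: sum_negf)
  ultimately show ?thesis
    using total unfolding arrow_term_def K_def D_def w_def by simp
qed

lemma MT_eq_sum_arrow_term: "MT V A E f q = (\<Sum>r\<in>A - A0 A f. arrow_term f q (A - A0 A f) r)"
proof -
  have "MT V A E f q = - (\<Sum>r\<in>A - A0 A f. \<Sum>v\<in>V \<union> A0 A f. xva V A E f q v r * (int (valency E v) - 2))"
    unfolding MT_def Nv_def sum_distrib_right by (subst sum.swap) simp
  then show ?thesis by (simp add: arrow_contribution sum_negf)
qed

end

section \<open>The restricted tree T_X\<close>

locale restriction = arrow_tree V A E for V A :: "'a set" and E +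
  fixes f :: "'a \<Rightarrow> int" and q :: "'a set \<Rightarrow> 'a \<Rightarrow> int" and v0 :: 'a and X :: "'a set"
  assumes pseudo_root: "pseudo_root V A E q v0"
    and X_subset: "X \<subseteq> A - A0 A f" and X_ne: "X \<noteq> {}"
begin

abbreviation "sV \<equiv> subV V A E v0 X"
abbreviation "sE \<equiv> subE V A E v0 X"
abbreviation "S \<equiv> sV \<union> X"
abbreviation "nv \<equiv> newv V A E q v0 X"
abbreviation "b \<equiv> bv V A E q v0 X"

lemma root: "v0 \<in> V" "v0 \<in> V \<union> A"
  using pseudo_root unfolding pseudo_root_def by auto

lemma X_arrows: "X \<subseteq> A" "X \<subseteq> V \<union> A"
  using X_subset by auto

lemma restricted_cells: "sV \<subseteq> V" "S \<subseteq> V \<union> A" "finite S" "nv \<subseteq> sV"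
  using X_arrows finite_cells finite_subset unfolding subV_def newv_def by auto

lemma set_gamma_root_arrow: "\<alpha> \<in> X \<Longrightarrow> set (\<gamma> v0 \<alpha>) \<subseteq> sV \<union> {\<alpha>}"
proof
  fix u assume \<alpha>: "\<alpha> \<in> X" and u: "u \<in> set (\<gamma> v0 \<alpha>)"
  note path = gamma_path[OF root(2) set_mp[OF X_arrows(2) \<alpha>]]
  show "u \<in> sV \<union> {\<alpha>}"
  proof (cases "u \<in> A")
    case True
    then have "u = v0 \<or> u = \<alpha>" using arrow_end_of_path[OF True _ u] path by simp
    then show ?thesis using True root disjoint by auto
  next
    case False
    then have "u \<in> V" using set_gamma_subset[OF root(2)] X_arrows(2) \<alpha> u by auto
    then show ?thesis unfolding subV_def using u \<alpha> by auto
  qed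
qed

lemma root_in_restriction: "v0 \<in> sV"
proof -
  obtain \<alpha> where "\<alpha> \<in> X" using X_ne by blast
  then show ?thesis unfolding subV_def using root ends_in_gamma[OF root(2)] X_arrows(2) by blast
qed

lemma gamma_root_in_restriction:
  assumes "u \<in> S"
  shows "set (edge_list (\<gamma> v0 u)) \<subseteq> sE" "set (\<gamma> v0 u) \<subseteq> S"
proof -
  obtain \<alpha> where \<alpha>: "\<alpha> \<in> X" "u \<in> set (\<gamma> v0 \<alpha>)"
    using assms ends_in_gamma[OF root(2)] X_arrows(2) unfolding subV_def by blast
  then obtain xs ys where split: "\<gamma> v0 \<alpha> = xs @ u # ys" by (meson split_list)
  have "\<alpha> \<in> V \<union> A" using X_arrows(2) \<alpha>(1) by blast
  then have prefix: "\<gamma> v0 u = xs @ [u]" using gamma_prefix[OF root(2) _ split] by blast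
  have "set (edge_list (\<gamma> v0 \<alpha>)) \<subseteq> sE" unfolding subE_def path_edges_eq using \<alpha>(1) by auto
  then show "set (edge_list (\<gamma> v0 u)) \<subseteq> sE"
    unfolding prefix using split edge_list_append[of xs u ys] by auto
  show "set (\<gamma> v0 u) \<subseteq> S" using set_gamma_root_arrow[OF \<alpha>(1)] \<alpha>(1) split prefix by auto
qed

lemma gamma_in_restriction:
  assumes a: "a \<in> S" and c: "c \<in> S"
  shows "set (edge_list (\<gamma> a c)) \<subseteq> sE" "set (\<gamma> a c) \<subseteq> S"
proof -
  have aC: "a \<in> V \<union> A" and cC: "c \<in> V \<union> A" using a c restricted_cells by auto
  have w1: "walk (V \<union> A) E (\<gamma> a v0)" and w2: "walk (V \<union> A) E (\<gamma> v0 c)"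
    using gamma_path[OF aC root(2)] gamma_path[OF root(2) cC] walk_if_is_path by blast+
  have "last (\<gamma> a v0) = hd (\<gamma> v0 c)" using gamma_path[OF aC root(2)] gamma_path[OF root(2) cC] by simp
  note joined = walk_append[OF w1 w2 this]
  have ends: "hd (\<gamma> a v0 @ tl (\<gamma> v0 c)) = a" "last (\<gamma> a v0 @ tl (\<gamma> v0 c)) = c"
    using joined gamma_path[OF aC root(2)] gamma_path[OF root(2) cC] by auto
  have "set (edge_list (\<gamma> a v0)) = set (edge_list (\<gamma> v0 a))" "set (\<gamma> a v0) = set (\<gamma> v0 a)"
    using edges_gamma_sym[OF root(2) aC] gamma_sym[OF root(2) aC] by simp_all
  then show "set (edge_list (\<gamma> a c)) \<subseteq> sE" "set (\<gamma> a c) \<subseteq> S"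
    using gamma_within_walk[OF joined(1)] joined(4,5) gamma_root_in_restriction[OF a]
      gamma_root_in_restriction[OF c] unfolding ends by auto
qed

lemma restricted_edgeD: "e \<in> sE \<Longrightarrow> e \<in> E \<and> e \<subseteq> S"
proof -
  assume "e \<in> sE"
  then obtain \<alpha> where \<alpha>: "\<alpha> \<in> X" "e \<in> set (edge_list (\<gamma> v0 \<alpha>))" unfolding subE_def path_edges_eq by auto
  then show ?thesis using edges_gamma_subset[OF root(2)] X_arrows(2) subset_if_in_edge_list[OF \<alpha>(2)]
      set_gamma_root_arrow[OF \<alpha>(1)] by blast
qed

lemma finite_restricted_edges: "finite sE"
  using finite_edges restricted_edgeD by (meson finite_subset subsetI)

lemma arrow_edge_in_restriction: "\<alpha> \<in> X \<Longrightarrow> e \<in> E \<Longrightarrow> \<alpha> \<in> e \<Longrightarrow> e \<in> sE"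
  using arrow_edge_in_gamma[OF _ root(2), of \<alpha> e] X_arrows root disjoint
  unfolding subE_def path_edges_eq by blast

text \<open>Each new arrow of T_X replaces an edge leaving the restricted tree; its far end serves as
  the image of the new arrow when T_X is embedded back into the tree.\<close>

definition outer_neighbour :: "'a \<Rightarrow> 'a" where
  "outer_neighbour v = (SOME u. {v, u} \<in> E \<and> {v, u} \<notin> sE)"

lemma outer_neighbour_edge:
  assumes "v \<in> nv"
  shows "{v, outer_neighbour v} \<in> E" "{v, outer_neighbour v} \<notin> sE"
proof -
  have "b v \<noteq> 1" using assms unfolding newv_def by simp
  then obtain e where e: "e \<in> E" "v \<in> e" "e \<notin> sE" unfolding bv_def by (metis (no_types, lifting) prod.empty empty_Collect_eq)
  then obtain c where "e = {v, c}" by (meson edge_obtain_other_end)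
  then have "\<exists>u. {v, u} \<in> E \<and> {v, u} \<notin> sE" using e by blast
  then show "{v, outer_neighbour v} \<in> E" "{v, outer_neighbour v} \<notin> sE"
    unfolding outer_neighbour_def by (metis (mono_tags, lifting) someI_ex)+
qed

lemma outer_neighbour_cell: "v \<in> nv \<Longrightarrow> outer_neighbour v \<in> V \<union> A"
  using outer_neighbour_edge edgeD by blast

lemma outer_neighbour_outside:
  assumes v: "v \<in> nv"
  shows "outer_neighbour v \<notin> S"
proof
  assume "outer_neighbour v \<in> S"
  moreover have "v \<in> S" using v restricted_cells by auto
  ultimately have "{v, outer_neighbour v} \<in> sE"
    using gamma_in_restriction(1) gamma_edge[OF outer_neighbour_edge(1)[OF v]] by fastforce
  then show False using outer_neighbour_edge(2)[OF v] by simp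
qed

lemma inj_on_outer_neighbour: "inj_on outer_neighbour nv"
proof (rule inj_onI, rule ccontr)
  fix v v' assume v: "v \<in> nv" "v' \<in> nv" "outer_neighbour v = outer_neighbour v'" "v \<noteq> v'"
  have vS: "v \<in> S" "v' \<in> S" using v restricted_cells by auto
  define u where "u = outer_neighbour v"
  have e: "{v, u} \<in> E" "{u, v'} \<in> E"
    using outer_neighbour_edge(1)[OF v(1)] outer_neighbour_edge(1)[OF v(2)] v(3) u_def
    by (auto simp: insert_commute)
  have uS: "u \<notin> S" using outer_neighbour_outside[OF v(1)] u_def by simp
  have "walk (V \<union> A) E [v, u, v']" unfolding walk_def using e edgeD by auto
  moreover have "distinct [v, u, v']" using v(4) uS vS by auto
  ultimately have "\<gamma> v v' = [v, u, v']" by (intro gamma_eqI is_path_if_distinct_walk) auto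
  then have "u \<in> S" using gamma_in_restriction(2)[OF vS] by auto
  then show False using uS by simp
qed

abbreviation "CT \<equiv> TX_V V A E v0 X \<union> TX_A V A E q v0 X"
abbreviation "ET \<equiv> TX_E V A E q v0 X"

lemma TX_cells: "CT = Inl ` S \<union> Inr ` nv"
  unfolding TX_V_def TX_A_def by auto

lemma TX_edge_cases:
  assumes "\<epsilon> \<in> ET"
  obtains (old) e where "e \<in> sE" "\<epsilon> = Inl ` e" | (new) v where "v \<in> nv" "\<epsilon> = {Inl v, Inr v}"
  using assms unfolding TX_E_def by auto

lemma TX_edges_old: "e \<in> sE \<Longrightarrow> Inl ` e \<in> ET"
  and TX_edges_new: "v \<in> nv \<Longrightarrow> {Inl v, Inr v} \<in> ET"
  unfolding TX_E_def by auto

lemma TX_graph: "graph CT ET"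
proof -
  have "finite nv" using restricted_cells(3,4) by (meson Un_upper1 finite_subset)
  then have "finite CT" unfolding TX_cells using restricted_cells(3) by simp
  moreover have "\<epsilon> \<subseteq> CT \<and> card \<epsilon> = 2" if "\<epsilon> \<in> ET" for \<epsilon>
    using that
  proof (cases rule: TX_edge_cases)
    case (old e)
    then show ?thesis using restricted_edgeD[OF old(1)] edgeD[of e] card_image[of Inl e]
      unfolding TX_cells by auto
  next
    case (new v)
    then show ?thesis unfolding TX_cells using restricted_cells by auto
  qed
  ultimately show ?thesis unfolding graph_def by blast
qed

lemma map_Inl_gamma_walk:
  assumes "a \<in> S" "c \<in> S"
  shows "walk CT ET (map Inl (\<gamma> a c))"
proof -
  have "a \<in> V \<union> A" "c \<in> V \<union> A" using assms restricted_cells(2) by auto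
  then show ?thesis using gamma_in_restriction[OF assms] gamma_not_Nil TX_edges_old
    unfolding walk_def edge_list_map TX_cells by auto
qed

lemma map_Inl_gamma_path:
  assumes "a \<in> S" "c \<in> S"
  shows "is_path CT ET (map Inl (\<gamma> a c))"
proof (rule is_path_if_distinct_walk)
  show "walk CT ET (map Inl (\<gamma> a c))" using map_Inl_gamma_walk[OF assms] .
  show "distinct (map Inl (\<gamma> a c))"
    using distinct_gamma[of a c] assms restricted_cells(2) by (auto simp: distinct_map)
qed

lemma TX_walk_to_root:
  assumes "x \<in> CT"
  shows "\<exists>w. walk CT ET w \<and> hd w = x \<and> last w = Inl v0"
proof -
  have v0S: "v0 \<in> S" using root_in_restriction by simp
  have to_root: "walk CT ET (map Inl (\<gamma> a v0))" "map Inl (\<gamma> a v0) \<noteq> []"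
    "hd (map Inl (\<gamma> a v0)) = Inl a" "last (map Inl (\<gamma> a v0)) = Inl v0" if a: "a \<in> S" for a
  proof -
    have aC: "a \<in> V \<union> A" using a restricted_cells(2) by auto
    show "walk CT ET (map Inl (\<gamma> a v0))" using map_Inl_gamma_walk[OF a v0S] .
    show "map Inl (\<gamma> a v0) \<noteq> []" "hd (map Inl (\<gamma> a v0)) = Inl a" "last (map Inl (\<gamma> a v0)) = Inl v0"
      using gamma_path[OF aC root(2)] gamma_not_Nil[OF aC root(2)] by (auto simp: hd_map last_map)
  qed
  from assms consider (old) a where "a \<in> S" "x = Inl a" | (new) v where "v \<in> nv" "x = Inr v"
    unfolding TX_cells by blast
  then show ?thesis
  proof cases
    case old
    then show ?thesis using to_root by blast
  next
    case new
    then have vS: "v \<in> S" using restricted_cells by auto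
    have "{Inr v, hd (map Inl (\<gamma> v v0))} \<in> ET"
      unfolding to_root(3)[OF vS] using TX_edges_new[OF new(1)] by (metis insert_commute)
    then have "walk CT ET (Inr v # map Inl (\<gamma> v v0))"
      using to_root(1,2)[OF vS] new(1) unfolding walk_def edge_list_Cons[OF to_root(2)[OF vS]] TX_cells
      by auto
    moreover have "last (Inr v # map Inl (\<gamma> v v0)) = Inl v0" using to_root(2,4)[OF vS] by simp
    ultimately show ?thesis using new(2) by (intro exI[of _ "Inr v # map Inl (\<gamma> v v0)"]) simp
  qed
qed

lemma inj_on_TX_embedding: "inj_on (case_sum id outer_neighbour) CT"
proof (rule inj_onI)
  fix x y assume xy: "x \<in> CT" "y \<in> CT" "case_sum id outer_neighbour x = case_sum id outer_neighbour y"
  show "x = y"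
  proof (cases x; cases y)
    fix a a' assume "x = Inl a" "y = Inl a'"
    then show ?thesis using xy(3) by simp
  next
    fix a v assume "x = Inl a" "y = Inr v"
    then show ?thesis using xy outer_neighbour_outside unfolding TX_cells by auto
  next
    fix v a assume "x = Inr v" "y = Inl a"
    then show ?thesis using xy outer_neighbour_outside unfolding TX_cells by auto
  next
    fix v v' assume "x = Inr v" "y = Inr v'"
    then show ?thesis using xy inj_onD[OF inj_on_outer_neighbour] unfolding TX_cells by auto
  qed
qed

lemma TX_tree: "tree CT ET"
proof (rule tree_if_hom_into_tree[OF TX_graph tree inj_on_TX_embedding])
  show "case_sum id outer_neighbour ` CT \<subseteq> V \<union> A"
  proof -
    have "case_sum id outer_neighbour ` CT = S \<union> outer_neighbour ` nv"
      unfolding TX_cells by (simp add: image_Un image_image)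
    then show ?thesis using restricted_cells(2) outer_neighbour_cell by auto
  qed
  show "\<forall>\<epsilon>\<in>ET. case_sum id outer_neighbour ` \<epsilon> \<in> E"
  proof
    fix \<epsilon> assume "\<epsilon> \<in> ET"
    then show "case_sum id outer_neighbour ` \<epsilon> \<in> E"
    proof (cases rule: TX_edge_cases)
      case (old e)
      then show ?thesis using restricted_edgeD[OF old(1)] by (simp add: image_image)
    next
      case (new v)
      then show ?thesis using outer_neighbour_edge(1)[OF new(1)] by simp
    qed
  qed
  show "Inl v0 \<in> CT" unfolding TX_cells using root_in_restriction by simp
  show "\<forall>x\<in>CT. \<exists>w. walk CT ET w \<and> hd w = x \<and> last w = Inl v0"
    using TX_walk_to_root by blast
qed

lemma TX_arrow_valency: "x \<in> TX_A V A E q v0 X \<Longrightarrow> valency ET x = 1"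
proof -
  assume "x \<in> TX_A V A E q v0 X"
  then consider (old) \<alpha> where "\<alpha> \<in> X" "x = Inl \<alpha>" | (new) v where "v \<in> nv" "x = Inr v"
    unfolding TX_A_def by blast
  then show "valency ET x = 1"
  proof cases
    case old
    obtain e0 where e0: "{e\<in>E. \<alpha> \<in> e} = {e0}" using arrow_edge X_arrows old(1) by blast
    have "\<alpha> \<notin> nv" using old(1) X_arrows restricted_cells disjoint by blast
    then have "{\<epsilon>\<in>ET. x \<in> \<epsilon>} = (\<lambda>e. Inl ` e) ` {e\<in>sE. \<alpha> \<in> e}"
      unfolding TX_E_def old(2) by auto
    also have "{e\<in>sE. \<alpha> \<in> e} = {e0}"
      using e0 arrow_edge_in_restriction[OF old(1)] restricted_edgeD by blast
    finally show ?thesis unfolding valency_def by simp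
  next
    case new
    then have "{\<epsilon>\<in>ET. x \<in> \<epsilon>} = {{Inl v, Inr v}}" unfolding TX_E_def by auto
    then show ?thesis unfolding valency_def by simp
  qed
qed

lemma TX_arrow_tree: "arrow_tree (TX_V V A E v0 X) (TX_A V A E q v0 X) ET"
proof (unfold_locales)
  show "tree CT ET" by (rule TX_tree)
  show "TX_V V A E v0 X \<inter> TX_A V A E q v0 X = {}"
    unfolding TX_V_def TX_A_def using restricted_cells X_arrows disjoint by auto
qed (use TX_arrow_valency in blast)

abbreviation "qT \<equiv> TX_q V A E q v0 X"

lemma TX_gamma_Inl:
  assumes "a \<in> S" "c \<in> S"
  shows "gamma CT ET (Inl a) (Inl c) = map Inl (\<gamma> a c)"
proof -
  have C: "a \<in> V \<union> A" "c \<in> V \<union> A" using assms restricted_cells(2) by auto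
  show ?thesis using cell_tree.gamma_eqI[OF cell_tree.intro[OF TX_tree] map_Inl_gamma_path[OF assms]]
    gamma_path[OF C] gamma_not_Nil[OF C] by (simp add: hd_map last_map)
qed

lemma TX_parent_Inl:
  assumes \<beta>: "\<beta> \<in> X" and v: "v \<in> S" "v \<noteq> \<beta>"
  shows "cell_tree.parent CT ET (Inl \<beta>) (Inl v) = Inl (parent \<beta> v)"
proof -
  have C: "\<beta> \<in> V \<union> A" "v \<in> V \<union> A" using \<beta> v restricted_cells(2) by auto
  have "1 < length (\<gamma> v \<beta>)" using length_gamma_ge_2[OF C v(2)] by simp
  moreover have "\<beta> \<in> S" using \<beta> by simp
  ultimately show ?thesis
    unfolding cell_tree.parent_def[OF cell_tree.intro[OF TX_tree]] TX_gamma_Inl[OF v(1) \<open>\<beta> \<in> S\<close>] parent_def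
    by simp
qed

lemma TX_q_old: "qT (Inl ` e) (Inl u) = q e u"
proof -
  have "(Inr u :: 'a + 'a) \<notin> Inl ` e" "{z. (Inl z :: 'a + 'a) \<in> Inl ` e} = e" by auto
  then show ?thesis by (simp only: TX_q_def sum.case if_False)
qed

lemma TX_q_new: "qT {Inl v, Inr v} (Inl v) = b v"
  unfolding TX_q_def by simp

lemma inj_on_image_Inl: "inj_on (\<lambda>e. Inl ` e :: ('a + 'a) set) M"
  by (rule inj_onI) (auto simp: inj_image_eq_iff)

lemma TX_edges_at_Inl:
  "{\<epsilon>\<in>ET. Inl u \<in> \<epsilon>} = (\<lambda>e. Inl ` e) ` {e\<in>sE. u \<in> e} \<union> (if u \<in> nv then {{Inl u, Inr u}} else {})"
  unfolding TX_E_def by auto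

lemma bv_restriction: "u \<in> S \<Longrightarrow> u \<notin> nv \<Longrightarrow> b u = 1"
proof -
  assume u: "u \<in> S" "u \<notin> nv"
  show "b u = 1"
  proof (cases "u \<in> sV")
    case True
    then show ?thesis using u(2) unfolding newv_def by auto
  next
    case False
    then have "{e\<in>E. u \<in> e \<and> e \<notin> sE} = {}" using arrow_edge_in_restriction u(1) by blast
    then show ?thesis unfolding bv_def by (simp only: prod.empty)
  qed
qed

lemma TX_Qpath:
  assumes p: "set p \<subseteq> S" "set (edge_list p) \<subseteq> sE" and u: "u \<in> S"
  shows "Qpath ET qT (map Inl p) (Inl u) = Qpath E q p u"
proof -
  define M where "M = {e\<in>sE. u \<in> e \<and> e \<notin> path_edges p}"
  define N :: "('a + 'a) set set" where "N = (if u \<in> nv then {{Inl u, Inr u}} else {})"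
  have "path_edges (map Inl p) = (\<lambda>e. Inl ` e) ` path_edges p"
    unfolding path_edges_eq edge_list_map by simp
  then have split: "{\<epsilon>\<in>ET. Inl u \<in> \<epsilon> \<and> \<epsilon> \<notin> path_edges (map Inl p)} = (\<lambda>e. Inl ` e) ` M \<union> N"
    unfolding M_def N_def TX_E_def by (auto simp: inj_image_eq_iff)
  have finM: "finite M" unfolding M_def using finite_restricted_edges by simp
  have "Qpath ET qT (map Inl p) (Inl u) = (\<Prod>\<epsilon>\<in>(\<lambda>e. Inl ` e) ` M. qT \<epsilon> (Inl u)) * (\<Prod>\<epsilon>\<in>N. qT \<epsilon> (Inl u))"
    unfolding Qpath_def split using finM by (intro prod.union_disjoint) (auto simp: N_def)
  also have "(\<Prod>\<epsilon>\<in>(\<lambda>e. Inl ` e) ` M. qT \<epsilon> (Inl u)) = (\<Prod>e\<in>M. q e u)"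
    by (simp add: prod.reindex[OF inj_on_image_Inl] TX_q_old)
  also have "(\<Prod>\<epsilon>\<in>N. qT \<epsilon> (Inl u)) = b u"
    using bv_restriction[OF u] TX_q_new unfolding N_def by auto
  also have "(\<Prod>e\<in>M. q e u) * b u = Qpath E q p u"
  proof -
    have "{e\<in>E. u \<in> e \<and> e \<notin> path_edges p} = M \<union> {e\<in>E. u \<in> e \<and> e \<notin> sE}"
      unfolding M_def using p(2) restricted_edgeD unfolding path_edges_eq by auto
    moreover have "M \<inter> {e\<in>E. u \<in> e \<and> e \<notin> sE} = {}" unfolding M_def by auto
    ultimately show ?thesis unfolding Qpath_def bv_def using finM finite_edges
      by (simp add: prod.union_disjoint)
  qed
  finally show ?thesis .
qed

lemma TX_Qstar:
  assumes "a \<in> S" "c \<in> S"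
  shows "Qstar ET qT (gamma CT ET (Inl a) (Inl c)) = Qstar E q (\<gamma> a c)"
proof -
  have "Qpath ET qT (map Inl (\<gamma> a c)) (map Inl (\<gamma> a c) ! i) = Qpath E q (\<gamma> a c) (\<gamma> a c ! i)"
    if "i < length (\<gamma> a c)" for i
    using TX_Qpath[OF gamma_in_restriction(2,1)[OF assms]] gamma_in_restriction(2)[OF assms] that
    by (simp add: subset_iff)
  then show ?thesis unfolding TX_gamma_Inl[OF assms] Qstar_def by (intro prod.cong) auto
qed

definition inner_child_edges :: "'a \<Rightarrow> 'a \<Rightarrow> 'a set set" where
  "inner_child_edges \<beta> v = {e\<in>sE. v \<in> e} - {{v, parent \<beta> v}}"

lemma finite_inner_child_edges: "finite (inner_child_edges \<beta> v)"
  unfolding inner_child_edges_def using finite_restricted_edges by simp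

lemma TX_defect:
  assumes \<beta>: "\<beta> \<in> X" and v: "v \<in> sV"
  shows "defect (cell_tree.child_edges CT ET (Inl \<beta>) (Inl v)) (\<lambda>\<epsilon>. qT \<epsilon> (Inl v))
    = b v * defect (inner_child_edges \<beta> v) (\<lambda>e. q e v) + (b v - 1) * ((\<Prod>e\<in>inner_child_edges \<beta> v. q e v) - 1)"
proof -
  have vS: "v \<in> S" and v\<beta>: "v \<noteq> \<beta>" using \<beta> v X_arrows restricted_cells disjoint by auto
  define I :: "('a + 'a) set set" where "I = (\<lambda>e. Inl ` e) ` inner_child_edges \<beta> v"
  have children: "cell_tree.child_edges CT ET (Inl \<beta>) (Inl v) = I \<union> (if v \<in> nv then {{Inl v, Inr v}} else {})"
    unfolding cell_tree.child_edges_def[OF cell_tree.intro[OF TX_tree]] TX_parent_Inl[OF \<beta> vS v\<beta>]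
      TX_edges_at_Inl I_def inner_child_edges_def by (auto simp: inj_image_eq_iff)
  have defect_I: "defect I (\<lambda>\<epsilon>. qT \<epsilon> (Inl v)) = defect (inner_child_edges \<beta> v) (\<lambda>e. q e v)"
    unfolding I_def defect_reindex[OF inj_on_image_Inl] by (simp add: comp_def TX_q_old)
  have prod_I: "(\<Prod>\<epsilon>\<in>I. qT \<epsilon> (Inl v)) = (\<Prod>e\<in>inner_child_edges \<beta> v. q e v)"
    unfolding I_def by (simp add: prod.reindex[OF inj_on_image_Inl] TX_q_old)
  show ?thesis
  proof (cases "v \<in> nv")
    case True
    have "{Inl v, Inr v} \<notin> I" "finite I" unfolding I_def using finite_inner_child_edges by auto
    then show ?thesis unfolding children
      using True defect_insert[OF \<open>finite I\<close> \<open>{Inl v, Inr v} \<notin> I\<close>] defect_I prod_I TX_q_new by simp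
  next
    case False
    then show ?thesis unfolding children using bv_restriction[OF vS False] defect_I by simp
  qed
qed

text \<open>This is where the pseudo-root condition enters: among the edges cut off at v at most one
  carries a decoration different from 1, so they merge into the defect exactly as the single new
  arrow of T_X at v does (compare TX_defect).\<close>

lemma root_decoration: "e \<in> E \<Longrightarrow> v0 \<in> e \<Longrightarrow> q e v0 = 1"
  using pseudo_root unfolding pseudo_root_def by blast

lemma pseudo_root_card:
  "v \<in> V \<Longrightarrow> v \<noteq> v0 \<Longrightarrow> card {e\<in>E. v \<in> e \<and> e \<notin> path_edges (\<gamma> v0 v) \<and> q e v \<noteq> 1} \<le> 1"
  using pseudo_root unfolding pseudo_root_def by blast

lemma defect_split:
  assumes \<beta>: "\<beta> \<in> X" and v: "v \<in> sV"
  shows "defect (child_edges \<beta> v) (\<lambda>e. q e v)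
    = b v * defect (inner_child_edges \<beta> v) (\<lambda>e. q e v) + (b v - 1) * ((\<Prod>e\<in>inner_child_edges \<beta> v. q e v) - 1)"
proof -
  have vS: "v \<in> S" and \<beta>S: "\<beta> \<in> S" and v\<beta>: "v \<noteq> \<beta>" using \<beta> v X_arrows restricted_cells disjoint by auto
  have C: "\<beta> \<in> V \<union> A" "v \<in> V \<union> A" using vS \<beta> restricted_cells(2) by auto
  define Cut where "Cut = {e\<in>E. v \<in> e \<and> e \<notin> sE}"
  have "{v, parent \<beta> v} \<in> sE"
    using edges_gamma_at_start[OF C v\<beta>] gamma_in_restriction(1)[OF vS \<beta>S] by blast
  then have split: "child_edges \<beta> v = inner_child_edges \<beta> v \<union> Cut"
    unfolding child_edges_def inner_child_edges_def Cut_def using restricted_edgeD by auto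
  have disj: "inner_child_edges \<beta> v \<inter> Cut = {}" unfolding inner_child_edges_def Cut_def by auto
  have fin: "finite Cut" unfolding Cut_def using finite_edges by simp
  have card: "card {e\<in>Cut. q e v \<noteq> 1} \<le> 1"
  proof (cases "v = v0")
    case True
    then have "{e\<in>Cut. q e v \<noteq> 1} = {}" using root_decoration unfolding Cut_def by blast
    then show ?thesis by (simp only: card.empty)
  next
    case False
    have "{e\<in>Cut. q e v \<noteq> 1} \<subseteq> {e\<in>E. v \<in> e \<and> e \<notin> path_edges (\<gamma> v0 v) \<and> q e v \<noteq> 1}"
      unfolding Cut_def path_edges_eq using gamma_root_in_restriction(1)[OF vS] by blast
    then have "card {e\<in>Cut. q e v \<noteq> 1} \<le> card {e\<in>E. v \<in> e \<and> e \<notin> path_edges (\<gamma> v0 v) \<and> q e v \<noteq> 1}"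
      using finite_edges by (intro card_mono) auto
    also have "\<dots> \<le> 1" using pseudo_root_card False v restricted_cells(1) by blast
    finally show ?thesis .
  qed
  have "(\<Prod>e\<in>Cut. q e v) = b v" unfolding Cut_def bv_def ..
  then show ?thesis unfolding split defect_union_almost_ones[OF finite_inner_child_edges fin disj card] by simp
qed

lemma defect_outside_restriction:
  assumes \<beta>: "\<beta> \<in> X" and v: "v \<in> V" "v \<notin> sV"
  shows "defect (child_edges \<beta> v) (\<lambda>e. q e v) = 0"
proof -
  have C: "\<beta> \<in> V \<union> A" "v \<in> V \<union> A" using \<beta> v X_arrows by auto
  have off: "v \<notin> set (\<gamma> v0 \<beta>)" using v \<beta> unfolding subV_def by auto
  have vv0: "v \<noteq> v0" using v root_in_restriction by auto
  have "child_edges \<beta> v = child_edges v0 v"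
    unfolding child_edges_def parent_change_root[OF root(2) C(1) C(2) off] ..
  also have "\<dots> = {\<epsilon>\<in>E. v \<in> \<epsilon> \<and> \<epsilon> \<notin> path_edges (\<gamma> v0 v)}"
    using edges_off_gamma_at_start[OF root(2) C(2) vv0] edges_gamma_sym[OF root(2) C(2)]
    unfolding path_edges_eq by simp
  finally have "{e\<in>child_edges \<beta> v. q e v \<noteq> 1} = {e\<in>E. v \<in> e \<and> e \<notin> path_edges (\<gamma> v0 v) \<and> q e v \<noteq> 1}"
    by auto
  then have "card {e\<in>child_edges \<beta> v. q e v \<noteq> 1} \<le> 1" using pseudo_root_card[OF v(1) vv0] by simp
  then show ?thesis by (rule defect_almost_ones[OF finite_child_edges])
qed

lemma TX_arrow_term:
  assumes \<beta>: "\<beta> \<in> X"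
  shows "arrow_tree.arrow_term (TX_V V A E v0 X) (TX_A V A E q v0 X) ET (TX_f f) qT (Inl ` X) (Inl \<beta>) = arrow_term f q X \<beta>"
proof -
  interpret T: arrow_tree "TX_V V A E v0 X" "TX_A V A E q v0 X" ET by (rule TX_arrow_tree)
  have \<beta>S: "\<beta> \<in> S" and f\<beta>: "TX_f f (Inl \<beta>) = f \<beta>" using \<beta> by (auto simp: TX_f_def)
  have "(\<Sum>\<alpha>\<in>Inl ` X - {Inl \<beta>}. TX_f f (Inl \<beta>) * Qstar ET qT (T.\<gamma> \<alpha> (Inl \<beta>)))
      = (\<Sum>\<alpha>\<in>X - {\<beta>}. f \<beta> * Qstar E q (\<gamma> \<alpha> \<beta>))"
  proof -
    have "Inl ` X - {Inl \<beta>} = Inl ` (X - {\<beta>})" by auto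
    then have "(\<Sum>\<alpha>\<in>Inl ` X - {Inl \<beta>}. TX_f f (Inl \<beta>) * Qstar ET qT (T.\<gamma> \<alpha> (Inl \<beta>)))
        = (\<Sum>\<alpha>\<in>X - {\<beta>}. TX_f f (Inl \<beta>) * Qstar ET qT (T.\<gamma> (Inl \<alpha>) (Inl \<beta>)))"
      by (intro sum.reindex_cong[of Inl]) auto
    also have "\<dots> = (\<Sum>\<alpha>\<in>X - {\<beta>}. f \<beta> * Qstar E q (\<gamma> \<alpha> \<beta>))"
      using TX_Qstar[OF _ \<beta>S] f\<beta> by (intro sum.cong) auto
    finally show ?thesis .
  qed
  moreover have "(\<Sum>v\<in>TX_V V A E v0 X. TX_f f (Inl \<beta>) * Qstar ET qT (T.\<gamma> v (Inl \<beta>))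
        * defect (T.child_edges (Inl \<beta>) v) (\<lambda>e. qT e v))
      = (\<Sum>v\<in>sV. f \<beta> * Qstar E q (\<gamma> v \<beta>) * defect (child_edges \<beta> v) (\<lambda>e. q e v))"
  proof (rule sum.reindex_cong[of Inl])
    show "TX_V V A E v0 X = Inl ` sV" unfolding TX_V_def ..
    fix v assume v: "v \<in> sV"
    then show "TX_f f (Inl \<beta>) * Qstar ET qT (T.\<gamma> (Inl v) (Inl \<beta>)) * defect (T.child_edges (Inl \<beta>) (Inl v)) (\<lambda>e. qT e (Inl v))
        = f \<beta> * Qstar E q (\<gamma> v \<beta>) * defect (child_edges \<beta> v) (\<lambda>e. q e v)"
      using TX_Qstar[OF _ \<beta>S, of v] TX_defect[OF \<beta> v] defect_split[OF \<beta> v] f\<beta> by simp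
  qed simp
  moreover have "(\<Sum>v\<in>sV. f \<beta> * Qstar E q (\<gamma> v \<beta>) * defect (child_edges \<beta> v) (\<lambda>e. q e v))
      = (\<Sum>v\<in>V. f \<beta> * Qstar E q (\<gamma> v \<beta>) * defect (child_edges \<beta> v) (\<lambda>e. q e v))"
    using finite_cells restricted_cells(1) defect_outside_restriction[OF \<beta>]
    by (intro sum.mono_neutral_left) auto
  ultimately show ?thesis unfolding T.arrow_term_def arrow_term_def f\<beta> by simp
qed

lemma MX_eq_sum_arrow_term: "MX V A E f q v0 X = (\<Sum>\<beta>\<in>X. arrow_term f q X \<beta>)"
proof -
  interpret T: arrow_tree "TX_V V A E v0 X" "TX_A V A E q v0 X" ET by (rule TX_arrow_tree)
  have arrows: "TX_A V A E q v0 X - A0 (TX_A V A E q v0 X) (TX_f f) = Inl ` X"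
    using X_subset unfolding TX_A_def A0_def TX_f_def by auto
  show ?thesis unfolding MX_def T.MT_eq_sum_arrow_term arrows
    using TX_arrow_term by (simp add: sum.reindex)
qed

end

section \<open>Sums over partitions\<close>

lemma sum_partition_complement:
  assumes P: "partition_on B P" and B: "finite B"
  shows "(\<Sum>X\<in>P. \<Sum>a\<in>X. \<Sum>b\<in>B - X. F a b)
    = (\<Sum>a\<in>B. \<Sum>b\<in>B. if \<not> (\<exists>X\<in>P. a \<in> X \<and> b \<in> X) then F a b else 0)"
proof -
  have inner: "(\<Sum>b\<in>B - X. F a b) = (\<Sum>b\<in>B. if \<not> (\<exists>X\<in>P. a \<in> X \<and> b \<in> X) then F a b else 0)"
    if "X \<in> P" "a \<in> X" for X a
  proof -
    have "B - X = {b\<in>B. \<not> (\<exists>X\<in>P. a \<in> X \<and> b \<in> X)}"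
      using that partition_onD1[OF P] disjointD[OF partition_onD2[OF P]] by blast
    then show ?thesis by (simp only: sum.inter_filter[OF B])
  qed
  then have "(\<Sum>X\<in>P. \<Sum>a\<in>X. \<Sum>b\<in>B - X. F a b)
      = (\<Sum>X\<in>P. \<Sum>a\<in>X. \<Sum>b\<in>B. if \<not> (\<exists>X\<in>P. a \<in> X \<and> b \<in> X) then F a b else 0)"
    by (simp add: inner)
  also have "\<dots> = (\<Sum>a\<in>B. \<Sum>b\<in>B. if \<not> (\<exists>X\<in>P. a \<in> X \<and> b \<in> X) then F a b else 0)"
    by (rule sum.partition[OF B P, symmetric])
  finally show ?thesis .
qed

lemma sum_partition_complement_swap:
  assumes "partition_on B P" "finite B"
  shows "(\<Sum>X\<in>P. \<Sum>a\<in>X. \<Sum>b\<in>B - X. F a b) = (\<Sum>X\<in>P. \<Sum>a\<in>X. \<Sum>b\<in>B - X. F b a)"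
  unfolding sum_partition_complement[OF assms] by (subst sum.swap) (auto intro!: sum.cong)

lemma sum_distinct_blocks:
  assumes P: "partition_on B P" and B: "finite B"
  shows "(\<Sum>p\<in>{(X, Y) \<in> P \<times> P. X \<noteq> Y}. G (fst p) (snd p))
    = (\<Sum>X\<in>P. \<Sum>Y\<in>P - {X}. G X Y)"
proof -
  have "{(X, Y) \<in> P \<times> P. X \<noteq> Y} = Sigma P (\<lambda>X. P - {X})" by auto
  then show ?thesis using finite_elements[OF B P] by (simp add: sum.Sigma split_def)
qed

lemma sum_other_blocks:
  assumes P: "partition_on B P" and B: "finite B" and X: "X \<in> P"
  shows "(\<Sum>Y\<in>P - {X}. \<Sum>b\<in>Y. F b) = (\<Sum>b\<in>B - X. F b)"
proof -
  have "partition_on (B - X) (P - {X})"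
    using P X unfolding partition_on_def disjoint_def by auto
  then show ?thesis using sum.partition[of "B - X" "P - {X}" F] B by simp
qed

lemma II_eq_sum:
  assumes "finite X" "finite Y"
  shows "II V A E f q X Y = (\<Sum>a\<in>X. \<Sum>b\<in>Y - {a}. Qstar E q (gamma (V \<union> A) E a b) * f a * f b)"
proof -
  have "{(\<alpha>, \<beta>) \<in> X \<times> Y. \<alpha> \<noteq> \<beta>} = Sigma X (\<lambda>a. Y - {a})" by auto
  then show ?thesis unfolding II_def using assms by (simp add: sum.Sigma split_def)
qed

lemma II_disjoint:
  assumes "finite X" "finite Y" "X \<inter> Y = {}"
  shows "II V A E f q X Y = (\<Sum>a\<in>X. \<Sum>b\<in>Y. Qstar E q (gamma (V \<union> A) E a b) * f a * f b)"
  unfolding II_eq_sum[OF assms(1,2)] using assms(3) by (intro sum.cong refl) (auto simp: disjoint_iff)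

lemma sum_II_distinct_blocks:
  assumes P: "partition_on B P" and B: "finite B"
  shows "(\<Sum>p\<in>{(X, Y) \<in> P \<times> P. X \<noteq> Y}. II V A E f q (fst p) (snd p))
    = (\<Sum>X\<in>P. \<Sum>a\<in>X. \<Sum>b\<in>B - X. Qstar E q (gamma (V \<union> A) E a b) * f a * f b)"
proof -
  have finite: "finite X" if "X \<in> P" for X
    using that B partition_onD1[OF P] by (auto intro: finite_subset)
  have "(\<Sum>Y\<in>P - {X}. II V A E f q X Y)
      = (\<Sum>a\<in>X. \<Sum>b\<in>B - X. Qstar E q (gamma (V \<union> A) E a b) * f a * f b)" if X: "X \<in> P" for X
  proof -
    have "(\<Sum>Y\<in>P - {X}. II V A E f q X Y)
        = (\<Sum>Y\<in>P - {X}. \<Sum>a\<in>X. \<Sum>b\<in>Y. Qstar E q (gamma (V \<union> A) E a b) * f a * f b)"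
      using finite disjointD[OF partition_onD2[OF P] X] X by (intro sum.cong refl II_disjoint) auto
    also have "\<dots> = (\<Sum>a\<in>X. \<Sum>Y\<in>P - {X}. \<Sum>b\<in>Y. Qstar E q (gamma (V \<union> A) E a b) * f a * f b)"
      by (rule sum.swap)
    also have "\<dots> = (\<Sum>a\<in>X. \<Sum>b\<in>B - X. Qstar E q (gamma (V \<union> A) E a b) * f a * f b)"
      by (intro sum.cong refl) (rule sum_other_blocks[OF P B X])
    finally show ?thesis .
  qed
  then show ?thesis unfolding sum_distinct_blocks[OF P B] by simp
qed

lemma frakM_eq_sum:
  assumes "finite (A - A0 A f)" "X \<subseteq> A - A0 A f"
  shows "frakM V A E f q X = real_of_int (\<Sum>a\<in>X. \<Sum>b\<in>(A - A0 A f) - X.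
      (f a - 1) * Qstar E q (gamma (V \<union> A) E a b) * f b)"
proof -
  have "(1 - 1 / real_of_int (f a)) * real_of_int (II V A E f q {a} ((A - A0 A f) - X))
      = (\<Sum>b\<in>(A - A0 A f) - X. real_of_int ((f a - 1) * Qstar E q (gamma (V \<union> A) E a b) * f b))"
    if a: "a \<in> X" for a
  proof -
    have fa: "real_of_int (f a) \<noteq> 0" using a assms(2) unfolding A0_def by auto
    have "II V A E f q {a} ((A - A0 A f) - X)
        = (\<Sum>b\<in>(A - A0 A f) - X. Qstar E q (gamma (V \<union> A) E a b) * f a * f b)"
      using II_eq_sum[of "{a}" "(A - A0 A f) - X"] assms(1) a by simp
    then have "(1 - 1 / real_of_int (f a)) * real_of_int (II V A E f q {a} ((A - A0 A f) - X))
        = (\<Sum>b\<in>(A - A0 A f) - X. (1 - 1 / real_of_int (f a))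
            * real_of_int (Qstar E q (gamma (V \<union> A) E a b) * f a * f b))"
      by (simp only: of_int_sum sum_distrib_left)
    also have "\<dots> = (\<Sum>b\<in>(A - A0 A f) - X. real_of_int ((f a - 1) * Qstar E q (gamma (V \<union> A) E a b) * f b))"
      using fa by (intro sum.cong refl) (simp add: field_simps)
    finally show ?thesis .
  qed
  then show ?thesis unfolding frakM_def of_int_sum by (rule sum.cong[OF refl])
qed

context arrow_tree
begin

lemma arrow_term_mono_diff:
  assumes "finite Y" "X \<subseteq> Y" "r \<in> X"
  shows "arrow_term f q Y r = arrow_term f q X r - (\<Sum>\<alpha>\<in>Y - X. f r * Qstar E q (\<gamma> \<alpha> r))"
proof -
  have "Y - {r} = (X - {r}) \<union> (Y - X)" "(X - {r}) \<inter> (Y - X) = {}" using assms by auto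
  moreover have "finite (X - {r})" using assms finite_subset by blast
  ultimately show ?thesis unfolding arrow_term_def using assms(1) by (simp add: sum.union_disjoint)
qed

lemma MT_minus_sum_MX:
  assumes root: "pseudo_root V A E q v0" and P: "partition_on (A - A0 A f) P"
  shows "MT V A E f q - (\<Sum>X\<in>P. MX V A E f q v0 X)
    = - (\<Sum>X\<in>P. \<Sum>\<beta>\<in>X. \<Sum>\<alpha>\<in>(A - A0 A f) - X. f \<beta> * Qstar E q (\<gamma> \<alpha> \<beta>))"
proof -
  have B: "finite (A - A0 A f)" using finite_cells by simp
  have block: "X \<subseteq> A - A0 A f" "X \<noteq> {}" if "X \<in> P" for X
    using that partition_onD1[OF P] partition_onD3[OF P] by auto
  have MX: "MX V A E f q v0 X = (\<Sum>\<beta>\<in>X. arrow_term f q X \<beta>)" if "X \<in> P" for X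
  proof -
    interpret restriction V A E f q v0 X using root block[OF that] by unfold_locales
    show ?thesis by (rule MX_eq_sum_arrow_term)
  qed
  have "MT V A E f q = (\<Sum>X\<in>P. \<Sum>\<beta>\<in>X. arrow_term f q (A - A0 A f) \<beta>)"
    unfolding MT_eq_sum_arrow_term using sum.partition[OF B P] .
  then show ?thesis
    using MX arrow_term_mono_diff[OF B block(1)]
    by (simp add: sum_subtractf[symmetric] sum_negf)
qed

lemma MT_partition_formula:
  assumes root: "pseudo_root V A E q v0" and P: "partition_on (A - A0 A f) P"
  shows "real_of_int (MT V A E f q) = (\<Sum>X\<in>P. real_of_int (MX V A E f q v0 X)) + (\<Sum>X\<in>P. frakM V A E f q X)
     - real_of_int (\<Sum>X\<in>P. \<Sum>a\<in>X. \<Sum>b\<in>(A - A0 A f) - X. Qstar E q (\<gamma> a b) * f a * f b)"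
proof -
  define B where "B = A - A0 A f"
  define Q where "Q a b = Qstar E q (\<gamma> a b)" for a b
  have finB: "finite B" unfolding B_def using finite_cells by simp
  have block: "X \<subseteq> B" if "X \<in> P" for X using that partition_onD1[OF P] unfolding B_def by auto
  have "MT V A E f q - (\<Sum>X\<in>P. MX V A E f q v0 X) = - (\<Sum>X\<in>P. \<Sum>a\<in>X. \<Sum>b\<in>B - X. f a * Q b a)"
    using MT_minus_sum_MX[OF root P] unfolding B_def Q_def .
  also have "\<dots> = - (\<Sum>X\<in>P. \<Sum>a\<in>X. \<Sum>b\<in>B - X. Q a b * f b)"
    using sum_partition_complement_swap[OF P[folded B_def] finB, of "\<lambda>a b. f a * Q b a"]
    by (simp add: mult.commute)
  also have "\<dots> = (\<Sum>X\<in>P. \<Sum>a\<in>X. \<Sum>b\<in>B - X. (f a - 1) * Q a b * f b)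
      - (\<Sum>X\<in>P. \<Sum>a\<in>X. \<Sum>b\<in>B - X. Q a b * f a * f b)"
    by (simp add: sum_subtractf[symmetric] sum_negf[symmetric] algebra_simps)
  finally have "real_of_int (MT V A E f q) - (\<Sum>X\<in>P. real_of_int (MX V A E f q v0 X))
      = (\<Sum>X\<in>P. frakM V A E f q X) - real_of_int (\<Sum>X\<in>P. \<Sum>a\<in>X. \<Sum>b\<in>B - X. Q a b * f a * f b)"
    using frakM_eq_sum[OF finB[unfolded B_def] block[unfolded B_def]]
    unfolding B_def Q_def by (simp flip: of_int_sum of_int_diff)
  then show ?thesis unfolding B_def Q_def by simp
qed

lemma MT_singletons_formula:
  assumes root: "pseudo_root V A E q v0"
  shows "real_of_int (MT V A E f q) = (\<Sum>\<alpha>\<in>A - A0 A f. real_of_int (MX V A E f q v0 {\<alpha>}))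
      + (\<Sum>\<alpha>\<in>A - A0 A f. frakM V A E f q {\<alpha>}) - real_of_int (II V A E f q (A - A0 A f) (A - A0 A f))"
proof -
  have fin: "finite (A - A0 A f)" using finite_cells by simp
  have "inj_on (\<lambda>a. {a}) (A - A0 A f)" by simp
  then show ?thesis
    using MT_partition_formula[OF root partition_on_singletons]
    unfolding II_eq_sum[OF fin fin] by (simp add: sum.reindex)
qed

end

theorem theorem4p16:
  fixes V A :: "'a set" and E :: "'a set set" and f :: "'a \<Rightarrow> int"
    and q :: "'a set \<Rightarrow> 'a \<Rightarrow> int" and v0 :: 'a and P :: "'a set set"
  assumes "dptree V A E f q v0"
    and "partition_on (A - A0 A f) P"
  shows "(real_of_int (MT V A E f q) =
           (\<Sum>\<alpha>\<in>A - A0 A f. real_of_int (MX V A E f q v0 {\<alpha>}))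
         + (\<Sum>\<alpha>\<in>A - A0 A f. frakM V A E f q {\<alpha>})
         - real_of_int (II V A E f q (A - A0 A f) (A - A0 A f)))
       \<and> (real_of_int (MT V A E f q) =
           (\<Sum>X\<in>P. real_of_int (MX V A E f q v0 X))
         + (\<Sum>X\<in>P. frakM V A E f q X)
         - real_of_int (\<Sum>p\<in>{(X, Y) \<in> P \<times> P. X \<noteq> Y}. II V A E f q (fst p) (snd p)))"
proof -
  have "dtree V A E f q" and root: "pseudo_root V A E q v0"
    using assms(1) unfolding dptree_def by auto
  then interpret arrow_tree V A E
    unfolding dtree_def by unfold_locales auto
  have "finite (A - A0 A f)" using finite_cells by simp
  then show ?thesis
    using MT_singletons_formula[OF root] MT_partition_formula[OF root assms(2)]
      sum_II_distinct_blocks[OF assms(2)] by simp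
qed

end
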